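(* Let $r(n)$ be defined by $\sum_{n\ge0}r(n)q^n=\frac{(q^2;q^2)_\infty^2}{(q;q)_\infty^5}=\frac{(-q;q)_\infty^2}{(q;q)_\infty^3}$ (the number of three-colored overpartitions of $n$ with no overlined parts of the third color). Then for every $n\ge0$, $$r(n)=\sum_{\substack{c\in\mathcal C_{P_5}\\ |c|=n}}\ \prod_{j\in\mathbb Z\setminus\{0\}}(6j-1)^{m_{j(3j-1)/2}(c)},$$ where $P_5=\{j(3j-1)/2: j\in\mathbb Z\setminus\{0\}\}$.
   Context: $(a;q)_\infty:=\prod_{i\ge0}(1-aq^i)$. A composition is an ordered finite sequence of positive integers (including the empty one); $|c|$ is the sum of parts; $m_i(c)$ is the number of parts equal to $i$; $\mathcal C_T$ is the set of compositions with all parts in $T$. *)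

theory Defs
  imports "HOL-Computational_Algebra.Formal_Power_Series"
begin

definition qpoch_inf :: "'a::field fps \<Rightarrow> 'a fps \<Rightarrow> 'a fps" where
  "qpoch_inf a q = lim (\<lambda>N. \<Prod>i<N. 1 - a * q ^ i)"

definition r_gf :: "rat fps" where
  "r_gf = qpoch_inf (fps_X ^ 2) (fps_X ^ 2) ^ 2 / qpoch_inf fps_X fps_X ^ 5"

definition r :: "nat \<Rightarrow> rat" where
  "r n = fps_nth r_gf n"

definition pent :: "int \<Rightarrow> int" where
  "pent j = j * (3 * j - 1) div 2"

definition P5 :: "nat set" where
  "P5 = {nat (pent j) | j. j \<noteq> 0}"

definition compositions :: "nat set \<Rightarrow> nat \<Rightarrow> nat list set" where
  "compositions T n = {c. (\<forall>x\<in>set c. 0 < x) \<and> set c \<subseteq> T \<and> sum_list c = n}"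

end

theory Submission
  imports Defs
begin

text \<open>Since \<open>(q; q)\<^sub>\<infinity> = (q; q\<^sup>2)\<^sub>\<infinity> (q\<^sup>2; q\<^sup>2)\<^sub>\<infinity>\<close>, the generating function of \<open>r\<close> is
  \<open>1 / ((q; q)\<^sub>\<infinity>\<^sup>3 (q; q\<^sup>2)\<^sub>\<infinity>\<^sup>2)\<close>. Multiplying two Jacobi triple products and
  regrouping the summation lattice \<open>\<int>\<^sup>2\<close> by residues mod 3 gives a form of the quintuple
  product identity; differentiating it at \<open>z = 1\<close> yields
  \<open>\<Sum>\<^sub>j (6j - 1) q\<^bsup>j(3j-1)/2\<^esup> = - (q; q)\<^sub>\<infinity>\<^sup>3 (q; q\<^sup>2)\<^sub>\<infinity>\<^sup>2\<close>.
  So \<open>r\<close> is the reciprocal of a series with constant term \<open>-1\<close> whose other coefficients are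
  \<open>6j - 1\<close> at the pentagonal numbers; expanding this reciprocal geometrically, i.e. solving the
  resulting convolution recurrence, gives the sum over compositions into pentagonal numbers.\<close>

unbundle fps_syntax

definition eq_upto :: "nat \<Rightarrow> 'a::zero fps \<Rightarrow> 'a fps \<Rightarrow> bool" where
  "eq_upto n f g \<longleftrightarrow> (\<forall>i\<le>n. f $ i = g $ i)"

lemma eq_upto_refl [simp]: "eq_upto n f f"
  by (simp add: eq_upto_def)

lemma eq_upto_sym: "eq_upto n f g \<Longrightarrow> eq_upto n g f"
  by (simp add: eq_upto_def)

lemma eq_upto_trans [trans]: "eq_upto n f g \<Longrightarrow> eq_upto n g h \<Longrightarrow> eq_upto n f h"
  by (simp add: eq_upto_def)

lemma eq_upto_mono: "eq_upto n f g \<Longrightarrow> m \<le> n \<Longrightarrow> eq_upto m f g"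
  by (simp add: eq_upto_def)

lemma eq_upto_add: "eq_upto n f f' \<Longrightarrow> eq_upto n g g' \<Longrightarrow> eq_upto n (f + g) (f' + g')"
  by (simp add: eq_upto_def)

lemma eq_upto_mult:
  "eq_upto n (f :: 'a::comm_ring_1 fps) f' \<Longrightarrow> eq_upto n g g' \<Longrightarrow> eq_upto n (f * g) (f' * g')"
  by (simp add: eq_upto_def fps_mult_nth)

lemma eq_upto_sum: "(\<And>x. x \<in> A \<Longrightarrow> eq_upto n (f x) (g x)) \<Longrightarrow> eq_upto n (sum f A) (sum g A)"
  by (induction A rule: infinite_finite_induct) (auto intro: eq_upto_add)

lemma eq_upto_prod:
  "(\<And>x. x \<in> A \<Longrightarrow> eq_upto n (f x :: 'a::comm_ring_1 fps) (g x)) \<Longrightarrow> eq_upto n (prod f A) (prod g A)"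
  by (induction A rule: infinite_finite_induct) (auto intro: eq_upto_mult)

lemma fps_eq_if_eq_upto: "(\<And>n. eq_upto n f g) \<Longrightarrow> f = g"
  by (auto simp: eq_upto_def fps_eq_iff)

lemma eq_upto_mult_cancel:
  fixes f g u :: "'a::comm_ring_1 fps"
  assumes fg: "eq_upto n (f * u) (g * u)" and u: "u $ 0 = 1"
  shows "eq_upto n f g"
proof -
  have "f $ m = g $ m" if "m \<le> n" for m
    using that
  proof (induction m rule: less_induct)
    case (less m)
    have "(\<Sum>i=0..m. f $ i * u $ (m - i)) = (\<Sum>i=0..m. g $ i * u $ (m - i))"
      using fg less.prems by (simp add: eq_upto_def fps_mult_nth)
    moreover have "(\<Sum>i\<in>{0..m} - {m}. f $ i * u $ (m - i)) = (\<Sum>i\<in>{0..m} - {m}. g $ i * u $ (m - i))"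
      using less by (intro sum.cong) auto
    ultimately show ?case
      using u by (simp add: sum.remove[of "{0..m}" m])
  qed
  thus ?thesis by (simp add: eq_upto_def)
qed

lemma eq_upto_mult_power_zero:
  fixes Q f :: "'a::comm_ring_1 fps"
  assumes "Q $ 0 = 0" "n < i"
  shows "eq_upto n (Q ^ i * f) 0"
proof -
  have "Q = fps_X * fps_shift 1 Q"
    using assms(1) by (intro fps_ext) (simp add: fps_X_mult_nth)
  hence "Q ^ i * f = fps_X ^ i * (fps_shift 1 Q ^ i * f)"
    by (metis mult.assoc power_mult_distrib)
  thus ?thesis
    using assms(2) by (simp add: eq_upto_def fps_X_power_mult_nth)
qed

section \<open>Infinite q-products\<close>

definition qpoch :: "'a::comm_ring_1 fps \<Rightarrow> 'a fps \<Rightarrow> nat \<Rightarrow> 'a fps" where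
  "qpoch c Q N = (\<Prod>i<N. 1 - c * Q ^ i)"

text \<open>For \<open>Q $ 0 = 0\<close> the coefficient of \<open>X^n\<close> in \<open>qpoch c Q N\<close> is stable for \<open>N > n\<close>;
  \<open>qpoch_lim\<close> collects the stable values and so makes sense over any commutative ring.\<close>
definition qpoch_lim :: "'a::comm_ring_1 fps \<Rightarrow> 'a fps \<Rightarrow> 'a fps" where
  "qpoch_lim c Q = Abs_fps (\<lambda>n. qpoch c Q (Suc n) $ n)"

lemma eq_upto_qpoch_Suc:
  assumes "Q $ 0 = 0" "n < N"
  shows "eq_upto n (qpoch c Q (Suc N)) (qpoch c Q N)"
proof -
  have "eq_upto n (c * Q ^ N) 0"
    using eq_upto_mult_power_zero[OF assms, of c] by (simp add: mult.commute)
  hence "eq_upto n (qpoch c Q N * (1 - c * Q ^ N)) (qpoch c Q N * 1)"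
    by (intro eq_upto_mult) (auto simp: eq_upto_def)
  thus ?thesis by (simp add: qpoch_def)
qed

lemma eq_upto_qpoch:
  assumes "Q $ 0 = 0" "n < N" "N \<le> M"
  shows "eq_upto n (qpoch c Q N) (qpoch c Q M)"
  using assms(3)
proof (induction M rule: dec_induct)
  case (step m)
  with assms(1,2) show ?case
    by (meson eq_upto_qpoch_Suc eq_upto_sym eq_upto_trans less_le_trans)
qed simp

lemma eq_upto_qpoch_lim:
  assumes "Q $ 0 = 0" "n < N"
  shows "eq_upto n (qpoch c Q N) (qpoch_lim c Q)"
  unfolding eq_upto_def
proof safe
  fix i assume "i \<le> n"
  with assms have "eq_upto i (qpoch c Q (Suc i)) (qpoch c Q N)"
    by (intro eq_upto_qpoch) auto
  thus "qpoch c Q N $ i = qpoch_lim c Q $ i"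
    by (simp add: eq_upto_def qpoch_lim_def)
qed

lemma qpoch_nth_0: "c $ 0 = 0 \<Longrightarrow> qpoch c Q N $ 0 = 1"
  by (induction N) (auto simp: qpoch_def)

lemma qpoch_lim_nth_0: "Q $ 0 = 0 \<Longrightarrow> c $ 0 = 0 \<Longrightarrow> qpoch_lim c Q $ 0 = 1"
  by (simp add: qpoch_lim_def qpoch_nth_0)

lemma qpoch_inf_eq_qpoch_lim:
  fixes c Q :: "'a::field fps"
  assumes "Q $ 0 = 0"
  shows "qpoch_inf c Q = qpoch_lim c Q"
proof -
  have "qpoch c Q \<longlonglongrightarrow> qpoch_lim c Q"
  proof (rule tendsto_fpsI)
    fix n
    have "\<forall>N\<ge>Suc n. qpoch c Q N $ n = qpoch_lim c Q $ n"
      using eq_upto_qpoch_lim[OF assms] by (auto simp: eq_upto_def Suc_le_eq)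
    thus "eventually (\<lambda>N. qpoch c Q N $ n = qpoch_lim c Q $ n) sequentially"
      unfolding eventually_sequentially by blast
  qed
  thus ?thesis by (simp add: qpoch_inf_def qpoch_def[abs_def] limI)
qed

lemma qpoch_lim_shift:
  assumes "Q $ 0 = 0"
  shows "qpoch_lim c Q = (1 - c) * qpoch_lim (c * Q) Q"
proof (rule fps_eq_if_eq_upto)
  fix n
  have "eq_upto n (qpoch_lim c Q) (qpoch c Q (Suc (Suc n)))"
    by (rule eq_upto_sym, rule eq_upto_qpoch_lim[OF assms]) simp
  also have "qpoch c Q (Suc (Suc n)) = (1 - c) * qpoch (c * Q) Q (Suc n)"
    unfolding qpoch_def prod.lessThan_Suc_shift by (simp add: mult_ac)
  also have "eq_upto n \<dots> ((1 - c) * qpoch_lim (c * Q) Q)"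
    by (intro eq_upto_mult eq_upto_refl eq_upto_qpoch_lim[OF assms]) simp
  finally show "eq_upto n (qpoch_lim c Q) ((1 - c) * qpoch_lim (c * Q) Q)" .
qed

lemma prod_lessThan_mult_split:
  fixes f :: "nat \<Rightarrow> 'a::comm_monoid_mult"
  assumes "0 < m"
  shows "(\<Prod>i<m * N. f i) = (\<Prod>r<m. \<Prod>j<N. f (r + m * j))"
proof -
  have "(\<Prod>i<m * N. f i) = (\<Prod>(r, j)\<in>{..<m} \<times> {..<N}. f (r + m * j))"
  proof (rule prod.reindex_bij_witness[of _ "\<lambda>(r, j). r + m * j" "\<lambda>i. (i mod m, i div m)"])
    fix p assume "p \<in> {..<m} \<times> {..<N}"
    then obtain r j where p: "p = (r, j)" "r < m" "j < N" by auto
    have "r + m * j < m * Suc j" using p by simp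
    also have "\<dots> \<le> m * N" using p by (intro mult_le_mono2) simp
    finally show "(\<lambda>(r, j). r + m * j) p \<in> {..<m * N}" using p by simp
    show "((\<lambda>(r, j). r + m * j) p mod m, (\<lambda>(r, j). r + m * j) p div m) = p"
      using p by auto
  qed (use assms in \<open>auto simp: less_mult_imp_div_less mult.commute\<close>)
  thus ?thesis by (simp add: prod.cartesian_product)
qed

lemma qpoch_lim_dissect:
  fixes Q c :: "'a::comm_ring_1 fps"
  assumes m: "0 < m" and Q: "Q $ 0 = 0"
  shows "qpoch_lim c Q = (\<Prod>r<m. qpoch_lim (c * Q ^ r) (Q ^ m))"
proof (rule fps_eq_if_eq_upto)
  fix n
  have Qm: "(Q ^ m) $ 0 = 0" using Q m by (simp add: fps_nth_power_0 zero_power)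
  have "eq_upto n (qpoch_lim c Q) (qpoch c Q (m * Suc n))"
    by (rule eq_upto_sym, rule eq_upto_qpoch_lim[OF Q]) (use m in \<open>cases m; simp\<close>)
  also have "qpoch c Q (m * Suc n) = (\<Prod>r<m. qpoch (c * Q ^ r) (Q ^ m) (Suc n))"
    unfolding qpoch_def prod_lessThan_mult_split[OF m]
    by (intro prod.cong refl) (simp add: power_add power_mult[symmetric] mult.commute)
  also have "eq_upto n \<dots> (\<Prod>r<m. qpoch_lim (c * Q ^ r) (Q ^ m))"
    by (intro eq_upto_prod eq_upto_qpoch_lim[OF Qm]) simp
  finally show "eq_upto n (qpoch_lim c Q) (\<Prod>r<m. qpoch_lim (c * Q ^ r) (Q ^ m))" .
qed

text \<open>The formal sum of \<open>c x * X ^ e x\<close> over \<open>x \<in> A\<close>; an infinite fibre of \<open>e\<close> gives the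
  junk coefficient \<open>0\<close>, so results that need more assume \<open>finite_fibres A e\<close>.\<close>
definition gf_sum :: "'b set \<Rightarrow> ('b \<Rightarrow> 'a::comm_monoid_add) \<Rightarrow> ('b \<Rightarrow> nat) \<Rightarrow> 'a fps" where
  "gf_sum A c e = Abs_fps (\<lambda>n. \<Sum>x\<in>{x\<in>A. e x = n}. c x)"

definition finite_fibres :: "'b set \<Rightarrow> ('b \<Rightarrow> nat) \<Rightarrow> bool" where
  "finite_fibres A e \<longleftrightarrow> (\<forall>n. finite {x\<in>A. e x = n})"

lemma gf_sum_nth: "gf_sum A c e $ n = (\<Sum>x\<in>{x\<in>A. e x = n}. c x)"
  by (simp add: gf_sum_def)

lemma gf_sum_cong:
  assumes "\<And>x. x \<in> A \<Longrightarrow> c x = c' x" "\<And>x. x \<in> A \<Longrightarrow> e x = e' x"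
  shows "gf_sum A c e = gf_sum A c' e'"
proof -
  have "{x\<in>A. e x = n} = {x\<in>A. e' x = n}" for n
    using assms(2) by auto
  thus ?thesis
    using assms(1) by (auto simp: gf_sum_def intro!: sum.cong)
qed

lemma gf_sum_reindex:
  assumes "bij_betw \<phi> A B"
  shows "gf_sum B c e = gf_sum A (c \<circ> \<phi>) (e \<circ> \<phi>)"
proof -
  have "bij_betw \<phi> {x\<in>A. e (\<phi> x) = n} {x\<in>B. e x = n}" for n
    using assms unfolding bij_betw_def inj_on_def by auto
  hence "(\<Sum>x\<in>{x\<in>A. e (\<phi> x) = n}. c (\<phi> x)) = (\<Sum>x\<in>{x\<in>B. e x = n}. c x)" for n
    by (rule sum.reindex_bij_betw)
  thus ?thesis
    by (simp add: gf_sum_def)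
qed

lemma gf_sum_diff:
  "gf_sum A (\<lambda>x. c x - d x) e = gf_sum A c e - (gf_sum A d e :: 'a::ab_group_add fps)"
  by (simp add: gf_sum_def fps_eq_iff sum_subtractf)

lemma gf_sum_uminus: "gf_sum A (\<lambda>x. - c x) e = - (gf_sum A c e :: 'a::ab_group_add fps)"
  by (simp add: gf_sum_def fps_eq_iff sum_negf)

lemma finite_fibres_subset: "finite_fibres A e \<Longrightarrow> B \<subseteq> A \<Longrightarrow> finite_fibres B e"
  unfolding finite_fibres_def by (auto intro: finite_subset[of _ "{x\<in>A. e x = _}"])

lemma gf_sum_Un_disjoint:
  assumes "A \<inter> B = {}" "finite_fibres A e" "finite_fibres B e"
  shows "gf_sum (A \<union> B) c e = gf_sum A c e + gf_sum B c e"
proof -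
  have "{x\<in>A \<union> B. e x = n} = {x\<in>A. e x = n} \<union> {x\<in>B. e x = n}" for n
    by auto
  thus ?thesis
    using assms by (simp add: gf_sum_def fps_eq_iff finite_fibres_def sum.union_disjoint disjoint_iff)
qed

lemma finite_fibres_Times:
  assumes "finite_fibres A e" "finite_fibres B g"
  shows "finite_fibres (A \<times> B) (\<lambda>(x, y). e x + g y)"
  unfolding finite_fibres_def
proof
  fix n
  have "{p\<in>A \<times> B. (\<lambda>(x, y). e x + g y) p = n}
          \<subseteq> (\<Union>i\<le>n. {x\<in>A. e x = i} \<times> {y\<in>B. g y = n - i})"
    by force
  moreover have "finite (\<Union>i\<le>n. {x\<in>A. e x = i} \<times> {y\<in>B. g y = n - i})"
    using assms by (auto simp: finite_fibres_def)
  ultimately show "finite {p\<in>A \<times> B. (\<lambda>(x, y). e x + g y) p = n}"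
    by (rule finite_subset)
qed

lemma gf_sum_mult:
  fixes c d :: "'b \<Rightarrow> 'a::comm_ring_1"
  assumes "finite_fibres A e" "finite_fibres B g"
  shows "gf_sum A c e * gf_sum B d g = gf_sum (A \<times> B) (\<lambda>(x, y). c x * d y) (\<lambda>(x, y). e x + g y)"
proof (rule fps_ext)
  fix n
  define F where "F = {p\<in>A \<times> B. (\<lambda>(x, y). e x + g y) p = n}"
  have "finite F"
    using finite_fibres_Times[OF assms] by (simp add: finite_fibres_def F_def)
  have "(gf_sum A c e * gf_sum B d g) $ n
      = (\<Sum>i=0..n. (\<Sum>x\<in>{x\<in>A. e x = i}. c x) * (\<Sum>y\<in>{y\<in>B. g y = n - i}. d y))"
    by (simp add: fps_mult_nth gf_sum_nth)
  also have "\<dots> = (\<Sum>i=0..n. \<Sum>p\<in>{x\<in>A. e x = i} \<times> {y\<in>B. g y = n - i}. (\<lambda>(x, y). c x * d y) p)"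
    by (simp add: sum_product sum.cartesian_product)
  also have "\<dots> = (\<Sum>i=0..n. \<Sum>p\<in>{p\<in>F. e (fst p) = i}. (\<lambda>(x, y). c x * d y) p)"
    by (intro sum.cong refl) (auto simp: F_def)
  also have "\<dots> = (\<Sum>p\<in>F. (\<lambda>(x, y). c x * d y) p)"
    by (rule sum.group[OF \<open>finite F\<close>]) (auto simp: F_def)
  also have "\<dots> = gf_sum (A \<times> B) (\<lambda>(x, y). c x * d y) (\<lambda>(x, y). e x + g y) $ n"
    by (simp add: gf_sum_nth F_def)
  finally show "(gf_sum A c e * gf_sum B d g) $ n = \<dots>" .
qed

lemma gf_sum_sign_reversing_involution:
  fixes c :: "'b \<Rightarrow> 'a::{idom,semiring_char_0}"
  assumes "\<And>x. x \<in> A \<Longrightarrow> \<iota> x \<in> A" "\<And>x. x \<in> A \<Longrightarrow> \<iota> (\<iota> x) = x"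
    and "\<And>x. x \<in> A \<Longrightarrow> c (\<iota> x) = - c x" "\<And>x. x \<in> A \<Longrightarrow> e (\<iota> x) = e x"
  shows "gf_sum A c e = 0"
proof (rule fps_ext)
  fix n
  define F where "F = {x\<in>A. e x = n}"
  have "\<iota> ` F \<subseteq> F"
    using assms(1,4) by (auto simp: F_def)
  moreover have "\<forall>x\<in>F. \<iota> (\<iota> x) = x"
    using assms(2) by (simp add: F_def)
  ultimately have "bij_betw \<iota> F F"
    by (intro bij_betw_byWitness[where f' = \<iota>])
  hence "(\<Sum>x\<in>F. c x) = (\<Sum>x\<in>F. c (\<iota> x))"
    using sum.reindex_bij_betw[of \<iota> F F c] by simp
  also have "\<dots> = (\<Sum>x\<in>F. - c x)"
    using assms(3) by (intro sum.cong) (auto simp: F_def)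
  also have "\<dots> = - (\<Sum>x\<in>F. c x)"
    by (simp add: sum_negf)
  finally have "2 * (\<Sum>x\<in>F. c x) = 0"
    by (metis mult_2 eq_neg_iff_add_eq_0)
  thus "gf_sum A c e $ n = 0 $ n"
    by (simp add: gf_sum_nth F_def)
qed

lemma sum_monomials_nth:
  fixes c :: "'b \<Rightarrow> 'a::comm_ring_1"
  assumes "finite K"
  shows "(\<Sum>x\<in>K. fps_const (c x) * fps_X ^ e x) $ i = (\<Sum>x\<in>{x\<in>K. e x = i}. c x)"
proof -
  have "(\<Sum>x\<in>K. fps_const (c x) * fps_X ^ e x) $ i = (\<Sum>x\<in>K. if e x = i then c x else 0)"
    by (simp add: fps_sum_nth) (intro sum.cong, auto)
  also have "\<dots> = (\<Sum>x\<in>{x\<in>K. e x = i}. c x)"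
    using assms by (simp add: sum.If_cases Int_def)
  finally show ?thesis .
qed

lemma eq_upto_gf_sum:
  fixes c :: "'b \<Rightarrow> 'a::comm_ring_1"
  assumes "finite K" "K \<subseteq> A" "\<And>x. x \<in> A \<Longrightarrow> e x \<le> n \<Longrightarrow> x \<in> K"
  shows "eq_upto n (\<Sum>x\<in>K. fps_const (c x) * fps_X ^ e x) (gf_sum A c e)"
  unfolding eq_upto_def
proof safe
  fix i assume "i \<le> n"
  with assms(2,3) have "{x\<in>K. e x = i} = {x\<in>A. e x = i}"
    by auto
  thus "(\<Sum>x\<in>K. fps_const (c x) * fps_X ^ e x) $ i = gf_sum A c e $ i"
    by (simp add: sum_monomials_nth[OF assms(1)] gf_sum_nth)
qed

section \<open>Gaussian binomial coefficients\<close>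

lemma Suc_choose_two: "Suc k choose 2 = (k choose 2) + k"
  by (simp add: numeral_2_eq_2)

lemma choose_two_add: "(a + b) choose 2 = (a choose 2) + (b choose 2) + a * b"
  by (induction b) (simp_all add: Suc_choose_two)

lemma two_times_choose_two: "2 * (k choose 2) = k * (k - 1)"
  by (induction k) (auto simp: Suc_choose_two algebra_simps)

fun qbinom :: "'a::comm_ring_1 \<Rightarrow> nat \<Rightarrow> nat \<Rightarrow> 'a" where
  "qbinom q n 0 = 1"
| "qbinom q 0 (Suc k) = 0"
| "qbinom q (Suc n) (Suc k) = qbinom q n k + q ^ Suc k * qbinom q n (Suc k)"

lemma qbinom_eq_0: "n < k \<Longrightarrow> qbinom q n k = 0"
proof (induction n arbitrary: k)
  case 0
  then show ?case by (cases k) auto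
next
  case (Suc n)
  then show ?case by (cases k) auto
qed

lemma qbinom_fps_const: "qbinom (fps_const q) n k = fps_const (qbinom q n k)"
  by (induction q n k rule: qbinom.induct) (simp_all add: fps_const_add fps_const_mult fps_const_power)

lemma qbinomial_theorem:
  fixes q x :: "'a::comm_ring_1"
  shows "(\<Prod>i<n. 1 + x * q ^ i) = (\<Sum>k\<le>n. qbinom q n k * q ^ (k choose 2) * x ^ k)"
proof (induction n arbitrary: x)
  case 0
  show ?case by (simp add: binomial_eq_0)
next
  case (Suc n)
  define B where "B j = qbinom q n j * q ^ (Suc j choose 2) * x ^ j" for j
  have "(\<Prod>i<Suc n. 1 + x * q ^ i) = (1 + x) * (\<Prod>i<n. 1 + (x * q) * q ^ i)"
    unfolding prod.lessThan_Suc_shift by (simp add: mult.assoc)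
  also have "\<dots> = (1 + x) * (\<Sum>k\<le>n. qbinom q n k * q ^ (k choose 2) * (x * q) ^ k)"
    by (simp add: Suc)
  also have "\<dots> = (\<Sum>k\<le>n. B k) + (\<Sum>k\<le>n. qbinom q n k * q ^ (Suc k choose 2) * x ^ Suc k)"
    by (simp add: B_def Suc_choose_two distrib_right sum_distrib_left power_mult_distrib
        power_add algebra_simps flip: sum.distrib)
  also have "(\<Sum>k\<le>n. B k) = (\<Sum>k\<le>Suc n. B k)"
    by (simp add: B_def qbinom_eq_0)
  also have "\<dots> = 1 + (\<Sum>k\<le>n. q ^ Suc k * qbinom q n (Suc k) * q ^ (Suc k choose 2) * x ^ Suc k)"
    unfolding sum.atMost_Suc_shift B_def
    by (intro arg_cong2[where f = "(+)"] sum.cong) (simp_all add: Suc_choose_two binomial_eq_0 power_add mult_ac)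
  finally have "(\<Prod>i<Suc n. 1 + x * q ^ i)
      = 1 + (\<Sum>k\<le>n. qbinom q (Suc n) (Suc k) * q ^ (Suc k choose 2) * x ^ Suc k)"
    by (simp add: sum.distrib algebra_simps)
  also have "\<dots> = (\<Sum>k\<le>Suc n. qbinom q (Suc n) k * q ^ (k choose 2) * x ^ k)"
    by (subst sum.atMost_Suc_shift) (simp add: binomial_eq_0)
  finally show ?case .
qed

lemma qbinomial_theorem_fps:
  fixes q c :: "'a::comm_ring_1"
  shows "(\<Prod>i<n. 1 + fps_X * fps_const (c * q ^ i))
           = Abs_fps (\<lambda>k. qbinom q n k * q ^ (k choose 2) * c ^ k)"
proof -
  have "(\<Prod>i<n. 1 + fps_X * fps_const (c * q ^ i)) = (\<Prod>i<n. 1 + (fps_X * fps_const c) * fps_const q ^ i)"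
    by (simp add: fps_const_mult fps_const_power mult.assoc)
  also have "\<dots> = (\<Sum>k\<le>n. fps_const (qbinom q n k * q ^ (k choose 2) * c ^ k) * fps_X ^ k)"
    by (subst qbinomial_theorem, rule sum.cong)
       (simp_all add: qbinom_fps_const fps_const_mult fps_const_power power_mult_distrib mult_ac)
  also have "\<dots> = Abs_fps (\<lambda>k. qbinom q n k * q ^ (k choose 2) * c ^ k)"
  proof (rule fps_ext)
    fix t
    have "{k\<in>{..n}. k = t} = (if t \<le> n then {t} else {})"
      by auto
    thus "(\<Sum>k\<le>n. fps_const (qbinom q n k * q ^ (k choose 2) * c ^ k) * fps_X ^ k) $ t
        = Abs_fps (\<lambda>k. qbinom q n k * q ^ (k choose 2) * c ^ k) $ t"
      by (simp add: sum_monomials_nth qbinom_eq_0)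
  qed
  finally show ?thesis .
qed

definition qfact :: "'a::comm_ring_1 \<Rightarrow> nat \<Rightarrow> 'a" where
  "qfact q m = (\<Prod>i<m. 1 - q ^ Suc i)"

lemma qfact_Suc: "qfact q (Suc m) = qfact q m * (1 - q ^ Suc m)"
  by (simp add: qfact_def)

lemma qbinom_mult_qfact: "k \<le> n \<Longrightarrow> qbinom q n k * qfact q k * qfact q (n - k) = qfact q n"
proof (induction n arbitrary: k)
  case 0
  then show ?case by (simp add: qfact_def)
next
  case (Suc n)
  show ?case
  proof (cases k)
    case 0
    then show ?thesis by (simp add: qfact_def)
  next
    case (Suc j)
    with Suc.prems have "j \<le> n" by simp
    have left: "qbinom q n j * qfact q (Suc j) * qfact q (n - j) = qfact q n * (1 - q ^ Suc j)"
      unfolding qfact_Suc Suc.IH[OF \<open>j \<le> n\<close>, symmetric] by (simp only: mult_ac)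
    have right: "q ^ Suc j * qbinom q n (Suc j) * qfact q (Suc j) * qfact q (n - j)
        = q ^ Suc j * qfact q n * (1 - q ^ (n - j))"
    proof (cases "j = n")
      case True
      then show ?thesis by (simp add: qbinom_eq_0)
    next
      case False
      with \<open>j \<le> n\<close> have "Suc j \<le> n" "n - j = Suc (n - Suc j)" by auto
      hence "q ^ Suc j * qbinom q n (Suc j) * qfact q (Suc j) * qfact q (n - j)
          = q ^ Suc j * (qbinom q n (Suc j) * qfact q (Suc j) * qfact q (n - Suc j)) * (1 - q ^ (n - j))"
        by (simp only: qfact_Suc mult_ac)
      also have "\<dots> = q ^ Suc j * qfact q n * (1 - q ^ (n - j))"
        using Suc.IH[OF \<open>Suc j \<le> n\<close>] by simp
      finally show ?thesis .
    qed
    have "q ^ j * q ^ (n - j) = q ^ n"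
      using \<open>j \<le> n\<close> by (simp flip: power_add)
    hence "q ^ Suc j * q ^ (n - j) = q ^ Suc n"
      by (simp add: mult.assoc)
    moreover have "w * (1 - a) + a * w * (1 - b) = w * (1 - a * b)" for w a b :: 'a
      by (simp add: algebra_simps)
    ultimately have "qfact q n * (1 - q ^ Suc j) + q ^ Suc j * qfact q n * (1 - q ^ (n - j))
        = qfact q n * (1 - q ^ Suc n)"
      by metis
    with left right show ?thesis
      by (simp add: Suc qfact_Suc algebra_simps)
  qed
qed

lemma qbinom_symmetric:
  fixes q :: "'a::idom"
  assumes "\<And>m. qfact q m \<noteq> 0" "k \<le> n"
  shows "qbinom q n k = qbinom q n (n - k)"
proof -
  have "qbinom q n k * (qfact q k * qfact q (n - k)) = qbinom q n (n - k) * (qfact q k * qfact q (n - k))"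
    using qbinom_mult_qfact[OF assms(2), of q] qbinom_mult_qfact[of "n - k" n q] assms(2)
    by (simp add: algebra_simps)
  thus ?thesis
    using assms(1) by simp
qed

lemma prod_lessThan_add: "(\<Prod>i<m + (n::nat). f i) = (\<Prod>i<m. f i) * (\<Prod>i<n. f (m + i))"
  by (induction n) (auto simp: mult.assoc)

lemma q_vandermonde:
  fixes q :: "'a::idom"
  assumes "q \<noteq> 0"
  shows "qbinom q (m + n) t = (\<Sum>u=0..t. qbinom q m u * qbinom q n (t - u) * q ^ ((t - u) * (m - u)))"
proof -
  have "(\<Prod>i<m + n. 1 + fps_X * fps_const (1 * q ^ i))
      = (\<Prod>i<m. 1 + fps_X * fps_const (1 * q ^ i)) * (\<Prod>i<n. 1 + fps_X * fps_const (q ^ m * q ^ i))"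
    by (simp add: prod_lessThan_add power_add)
  hence "Abs_fps (\<lambda>k. qbinom q (m + n) k * q ^ (k choose 2) * 1 ^ k)
      = Abs_fps (\<lambda>k. qbinom q m k * q ^ (k choose 2) * 1 ^ k)
        * Abs_fps (\<lambda>k. qbinom q n k * q ^ (k choose 2) * (q ^ m) ^ k)"
    by (simp only: qbinomial_theorem_fps)
  hence "qbinom q (m + n) t * q ^ (t choose 2)
      = (\<Sum>u=0..t. (qbinom q m u * q ^ (u choose 2))
                   * (qbinom q n (t - u) * q ^ ((t - u) choose 2) * (q ^ m) ^ (t - u)))"
    by (simp add: fps_eq_iff fps_mult_nth)
  also have "\<dots> = (\<Sum>u=0..t. q ^ (t choose 2) * (qbinom q m u * qbinom q n (t - u) * q ^ ((t - u) * (m - u))))"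
  proof (intro sum.cong refl)
    fix u assume u: "u \<in> {0..t}"
    show "qbinom q m u * q ^ (u choose 2) * (qbinom q n (t - u) * q ^ ((t - u) choose 2) * (q ^ m) ^ (t - u))
        = q ^ (t choose 2) * (qbinom q m u * qbinom q n (t - u) * q ^ ((t - u) * (m - u)))"
    proof (cases "u \<le> m")
      case True
      obtain d where d: "t = u + d" using u by (metis atLeastAtMost_iff le_add_diff_inverse)
      obtain e where e: "m = u + e" using True by (metis le_add_diff_inverse)
      have "(u choose 2) + ((t - u) choose 2) + m * (t - u) = (t choose 2) + (t - u) * (m - u)"
        unfolding d e choose_two_add by (simp add: algebra_simps)
      hence "q ^ (u choose 2) * q ^ ((t - u) choose 2) * (q ^ m) ^ (t - u) = q ^ (t choose 2) * q ^ ((t - u) * (m - u))"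
        by (simp flip: power_add power_mult)
      thus ?thesis by (simp add: algebra_simps)
    next
      case False
      then show ?thesis by (simp add: qbinom_eq_0)
    qed
  qed
  also have "\<dots> = q ^ (t choose 2) * (\<Sum>u=0..t. qbinom q m u * qbinom q n (t - u) * q ^ ((t - u) * (m - u)))"
    by (simp add: sum_distrib_left)
  finally show ?thesis
    using assms by (simp add: mult.commute)
qed

section \<open>The Jacobi triple product identity\<close>

text \<open>\<open>zpow a b k\<close> is the integer power \<open>a ^ k\<close>, with \<open>b\<close> playing the role of \<open>a\<inverse>\<close>;
  it is only meaningful when \<open>a * b = 1\<close>.\<close>
definition zpow :: "'a::comm_ring_1 \<Rightarrow> 'a \<Rightarrow> int \<Rightarrow> 'a" where
  "zpow a b k = (if k \<ge> 0 then a ^ nat k else b ^ nat (- k))"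

lemma power_mult_power_eq_zpow:
  assumes "a * b = 1"
  shows "a ^ i * b ^ j = zpow a b (int i - int j)"
proof (cases "j \<le> i")
  case True
  then obtain m where "i = j + m" by (metis le_add_diff_inverse)
  hence "a ^ i * b ^ j = a ^ m * (a * b) ^ j"
    by (simp add: power_add power_mult_distrib mult_ac)
  thus ?thesis using assms \<open>i = j + m\<close> by (simp add: zpow_def)
next
  case False
  then obtain m where m: "j = i + m" "m > 0" by (metis less_imp_add_positive not_le)
  hence "a ^ i * b ^ j = b ^ m * (a * b) ^ i"
    by (simp add: power_add power_mult_distrib mult_ac)
  thus ?thesis using assms m by (simp add: zpow_def)
qed

text \<open>The exponent of \<open>q\<close> in the \<open>k\<close>-th term \<open>(-x)\<^sup>k q\<^bsup>e\<^esup>\<close> of the triple product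
  \<open>(x q\<^sup>\<alpha>; q\<^bsup>\<alpha>+\<beta>\<^esup>)\<^sub>\<infinity> (x\<inverse> q\<^sup>\<beta>; q\<^bsup>\<alpha>+\<beta>\<^esup>)\<^sub>\<infinity> (q\<^bsup>\<alpha>+\<beta>\<^esup>; q\<^bsup>\<alpha>+\<beta>\<^esup>)\<^sub>\<infinity>\<close>,
  namely \<open>e = (\<alpha> k (k + 1) + \<beta> k (k - 1)) / 2\<close>.\<close>
definition jtp_exp :: "nat \<Rightarrow> nat \<Rightarrow> int \<Rightarrow> nat" where
  "jtp_exp \<alpha> \<beta> k =
     (if k \<ge> 0 then \<alpha> * (nat k + 1 choose 2) + \<beta> * (nat k choose 2)
      else \<alpha> * (nat (- k) choose 2) + \<beta> * (nat (- k) + 1 choose 2))"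

lemma jtp_exp_le_imp:
  assumes "1 \<le> \<alpha> + \<beta>" "jtp_exp \<alpha> \<beta> k \<le> n"
  shows "\<bar>k\<bar> \<le> int n + 1"
proof -
  define l where "l = nat \<bar>k\<bar>"
  have "l - 1 \<le> l choose 2"
    by (induction l) (auto simp: Suc_choose_two)
  also have "l choose 2 \<le> (\<alpha> + \<beta>) * (l choose 2)"
    using assms(1) by simp
  also have "\<dots> \<le> jtp_exp \<alpha> \<beta> k"
    by (auto simp: jtp_exp_def l_def algebra_simps Suc_choose_two)
  finally show ?thesis
    using assms(2) by (simp add: l_def)
qed

lemma finite_fibres_jtp_exp:
  assumes "1 \<le> \<alpha> + \<beta>"
  shows "finite_fibres A (jtp_exp \<alpha> \<beta>)"
  unfolding finite_fibres_def
proof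
  fix n
  have "k \<in> {- (int n + 1)..int n + 1}" if "jtp_exp \<alpha> \<beta> k = n" for k
    using jtp_exp_le_imp[OF assms, of k n] that by (simp add: abs_le_iff)
  hence "{k\<in>A. jtp_exp \<alpha> \<beta> k = n} \<subseteq> {- (int n + 1)..int n + 1}"
    by blast
  thus "finite {k\<in>A. jtp_exp \<alpha> \<beta> k = n}"
    by (rule finite_subset) simp
qed

lemma jtp_exp_eq:
  "(\<alpha> + \<beta>) * ((i choose 2) + (j choose 2)) + \<alpha> * i + \<beta> * j
     = (\<alpha> + \<beta>) * (i * j) + jtp_exp \<alpha> \<beta> (int i - int j)"
proof (cases "j \<le> i")
  case True
  then obtain m where m: "i = j + m" by (metis le_add_diff_inverse)
  have sq: "2 * (j choose 2) + j = j * j"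
    using two_times_choose_two[of j] by (cases j) auto
  have "(\<alpha> + \<beta>) * ((i choose 2) + (j choose 2)) + \<alpha> * i + \<beta> * j
      = (\<alpha> + \<beta>) * (2 * (j choose 2) + j) + (\<alpha> + \<beta>) * (j * m) + \<alpha> * (m + 1 choose 2) + \<beta> * (m choose 2)"
    unfolding m choose_two_add by (simp add: Suc_choose_two algebra_simps)
  also have "\<dots> = (\<alpha> + \<beta>) * (i * j) + jtp_exp \<alpha> \<beta> (int i - int j)"
    unfolding sq using m by (simp add: jtp_exp_def algebra_simps)
  finally show ?thesis .
next
  case False
  then obtain m where m: "j = i + m" "m > 0" by (metis less_imp_add_positive not_le)
  have sq: "2 * (i choose 2) + i = i * i"
    using two_times_choose_two[of i] by (cases i) auto
  have "(\<alpha> + \<beta>) * ((i choose 2) + (j choose 2)) + \<alpha> * i + \<beta> * j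
      = (\<alpha> + \<beta>) * (2 * (i choose 2) + i) + (\<alpha> + \<beta>) * (i * m) + \<alpha> * (m choose 2) + \<beta> * (m + 1 choose 2)"
    unfolding m choose_two_add by (simp add: Suc_choose_two algebra_simps)
  also have "\<dots> = (\<alpha> + \<beta>) * (i * j) + jtp_exp \<alpha> \<beta> (int i - int j)"
    unfolding sq using m by (simp add: jtp_exp_def algebra_simps)
  finally show ?thesis .
qed

lemma fps_monomial_power_uminus:
  "(- (fps_const D * fps_X ^ a)) ^ k = fps_const ((- D) ^ k) * (fps_X ^ (a * k) :: 'a::comm_ring_1 fps)"
proof -
  have "- (fps_const D * fps_X ^ a) = fps_const (- D) * (fps_X ^ a :: 'a fps)"
    by (metis fps_const_neg mult_minus_left)
  thus ?thesis by (simp add: power_mult_distrib power_mult)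
qed

lemma fps_X_power_mult_monomial:
  "fps_X ^ m * (fps_const a * fps_X ^ n) = fps_const a * (fps_X ^ (m + n) :: 'a::comm_ring_1 fps)"
  by (simp add: power_add mult_ac)

lemma fps_monomial_mult:
  "fps_const a * fps_X ^ m * (fps_const b * fps_X ^ n) = fps_const (a * b) * (fps_X ^ (m + n) :: 'a::comm_ring_1 fps)"
  by (simp only: fps_const_mult[symmetric] power_add mult_ac)

lemma qpoch_mult_qpoch_expansion:
  fixes D D' :: "'a::comm_ring_1" and \<alpha> \<beta> :: nat
  assumes "D * D' = 1"
  defines "Q \<equiv> fps_X ^ (\<alpha> + \<beta>)"
  shows "qpoch (fps_const D * fps_X ^ \<alpha>) Q N * qpoch (fps_const D' * fps_X ^ \<beta>) Q N
   = (\<Sum>i\<le>N. \<Sum>j\<le>N. qbinom Q N i * qbinom Q N j * Q ^ (i * j) *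
        (fps_const (zpow (- D) (- D') (int i - int j)) * fps_X ^ jtp_exp \<alpha> \<beta> (int i - int j)))"
proof -
  have expand: "qpoch c Q N = (\<Sum>k\<le>N. qbinom Q N k * Q ^ (k choose 2) * (- c) ^ k)" for c
    unfolding qpoch_def by (subst qbinomial_theorem[symmetric]) simp
  have summand: "Q ^ (i choose 2) * (- (fps_const D * fps_X ^ \<alpha>)) ^ i * (Q ^ (j choose 2) * (- (fps_const D' * fps_X ^ \<beta>)) ^ j)
     = Q ^ (i * j) * (fps_const (zpow (- D) (- D') (int i - int j)) * fps_X ^ jtp_exp \<alpha> \<beta> (int i - int j))"
    for i j
  proof -
    have "Q ^ (i choose 2) * (- (fps_const D * fps_X ^ \<alpha>)) ^ i * (Q ^ (j choose 2) * (- (fps_const D' * fps_X ^ \<beta>)) ^ j)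
       = fps_const ((- D) ^ i * (- D') ^ j) * fps_X ^ ((\<alpha> + \<beta>) * ((i choose 2) + (j choose 2)) + \<alpha> * i + \<beta> * j)"
      unfolding Q_def fps_monomial_power_uminus power_mult[symmetric] fps_X_power_mult_monomial fps_monomial_mult
      by (simp add: algebra_simps)
    also have "\<dots> = Q ^ (i * j) * (fps_const (zpow (- D) (- D') (int i - int j)) * fps_X ^ jtp_exp \<alpha> \<beta> (int i - int j))"
      unfolding power_mult_power_eq_zpow[of "- D" "- D'", simplified, OF assms(1)] jtp_exp_eq Q_def
        power_mult[symmetric] fps_X_power_mult_monomial ..
    finally show ?thesis .
  qed
  show ?thesis
    unfolding expand sum_product
  proof (intro sum.cong refl)
    fix i j
    show "qbinom Q N i * Q ^ (i choose 2) * (- (fps_const D * fps_X ^ \<alpha>)) ^ i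
          * (qbinom Q N j * Q ^ (j choose 2) * (- (fps_const D' * fps_X ^ \<beta>)) ^ j)
        = qbinom Q N i * qbinom Q N j * Q ^ (i * j)
          * (fps_const (zpow (- D) (- D') (int i - int j)) * fps_X ^ jtp_exp \<alpha> \<beta> (int i - int j))"
      using summand[of i j] by (simp only: mult_ac)
  qed
qed

lemma sum_sum_group_by_diff:
  fixes F :: "nat \<Rightarrow> nat \<Rightarrow> 'a::comm_monoid_add"
  shows "(\<Sum>i\<le>N. \<Sum>j\<le>N. F i j)
    = (\<Sum>k\<in>{- int N..int N}. \<Sum>(i, j)\<in>{p\<in>{..N} \<times> {..N}. int (fst p) - int (snd p) = k}. F i j)"
proof -
  have "(\<Sum>i\<le>N. \<Sum>j\<le>N. F i j) = (\<Sum>(i, j)\<in>{..N} \<times> {..N}. F i j)"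
    by (simp add: sum.cartesian_product)
  also have "\<dots> = (\<Sum>k\<in>{- int N..int N}. \<Sum>(i, j)\<in>{p\<in>{..N} \<times> {..N}. int (fst p) - int (snd p) = k}. F i j)"
    by (rule sum.group[symmetric]) force+
  finally show ?thesis .
qed

lemma int_diff_eq_int_iff: "int a - int b = int j \<longleftrightarrow> a = b + j"
  by linarith

definition qbinom_diag_sum :: "'a::comm_ring_1 \<Rightarrow> nat \<Rightarrow> int \<Rightarrow> 'a" where
  "qbinom_diag_sum Q N k =
     (\<Sum>(i, j)\<in>{p\<in>{..N} \<times> {..N}. int (fst p) - int (snd p) = k}. qbinom Q N i * qbinom Q N j * Q ^ (i * j))"

lemma qbinom_diag_sum_uminus: "qbinom_diag_sum Q N (- k) = qbinom_diag_sum Q N k"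
  unfolding qbinom_diag_sum_def
  by (rule sum.reindex_bij_witness[of _ "\<lambda>(i, j). (j, i)" "\<lambda>(i, j). (j, i)"]) (auto simp: mult_ac)

lemma qbinom_diag_sum_eq:
  fixes Q :: "'a::idom"
  assumes Q: "Q \<noteq> 0" "\<And>m. qfact Q m \<noteq> 0" and "j \<le> N"
  shows "qbinom_diag_sum Q N (int j) = qbinom Q (N + N) (N + j)"
proof -
  define f where "f u = qbinom Q N u * qbinom Q N (N + j - u) * Q ^ ((N + j - u) * (N - u))" for u
  have "qbinom_diag_sum Q N (int j) = (\<Sum>s\<in>{0..N - j}. qbinom Q N (s + j) * qbinom Q N s * Q ^ ((s + j) * s))"
    unfolding qbinom_diag_sum_def
    by (rule sum.reindex_bij_witness[of _ "\<lambda>s. (s + j, s)" snd])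
       (use \<open>j \<le> N\<close> in \<open>auto simp: int_diff_eq_int_iff\<close>)
  also have "\<dots> = (\<Sum>s\<in>{0..N - j}. f (N - s))"
  proof (intro sum.cong refl)
    fix s assume s: "s \<in> {0..N - j}"
    have "qbinom Q N (N - s) = qbinom Q N s"
      using qbinom_symmetric[OF Q(2), of s N] s by auto
    moreover have "N + j - (N - s) = s + j" "N - (N - s) = s"
      using s \<open>j \<le> N\<close> by auto
    ultimately show "qbinom Q N (s + j) * qbinom Q N s * Q ^ ((s + j) * s) = f (N - s)"
      by (simp add: f_def mult_ac add.commute)
  qed
  also have "\<dots> = (\<Sum>u\<in>{j..N}. f u)"
    by (rule sum.reindex_bij_witness[of _ "\<lambda>u. N - u" "\<lambda>u. N - u"]) (use \<open>j \<le> N\<close> in auto)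
  also have "\<dots> = (\<Sum>u=0..N + j. f u)"
  proof (rule sum.mono_neutral_left)
    show "\<forall>u\<in>{0..N + j} - {j..N}. f u = 0"
      by (auto simp: f_def qbinom_eq_0)
  qed auto
  also have "\<dots> = qbinom Q (N + N) (N + j)"
    unfolding f_def by (rule q_vandermonde[OF Q(1), symmetric])
  finally show ?thesis .
qed

lemma qfact_eq_qpoch: "qfact Q m = qpoch Q Q m"
  by (simp add: qfact_def qpoch_def)

lemma eq_upto_qbinom_mult_qpoch_lim:
  fixes Q :: "'a::comm_ring_1 fps"
  assumes Q: "Q $ 0 = 0" and "j < N"
  shows "eq_upto (N - j - 1) (qbinom Q (N + N) (N + j) * qpoch_lim Q Q) 1"
proof -
  define L where "L = N - j - 1"
  define P where "P = qpoch_lim Q Q"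
  have approx: "eq_upto L (qfact Q m) P" if "N - j \<le> m" for m
    unfolding qfact_eq_qpoch P_def by (rule eq_upto_qpoch_lim[OF Q]) (use that \<open>j < N\<close> in \<open>auto simp: L_def\<close>)
  have "qbinom Q (N + N) (N + j) * qfact Q (N + j) * qfact Q (N - j) = qfact Q (N + N)"
    using qbinom_mult_qfact[of "N + j" "N + N" Q] \<open>j < N\<close> by simp
  moreover have "eq_upto L (qbinom Q (N + N) (N + j) * P * P)
      (qbinom Q (N + N) (N + j) * qfact Q (N + j) * qfact Q (N - j))"
    by (intro eq_upto_mult eq_upto_refl eq_upto_sym[OF approx]) auto
  ultimately have "eq_upto L (qbinom Q (N + N) (N + j) * P * P) (1 * P)"
    using approx[of "N + N"] eq_upto_trans by force
  hence "eq_upto L (qbinom Q (N + N) (N + j) * P) 1"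
    by (rule eq_upto_mult_cancel) (simp add: P_def qpoch_lim_nth_0 Q)
  thus ?thesis by (simp add: L_def P_def)
qed

lemma eq_upto_monomial_mult_0:
  fixes Y :: "'a::comm_ring_1 fps"
  assumes "n < e"
  shows "eq_upto n (fps_const a * fps_X ^ e * Y) 0"
proof -
  have "fps_const a * fps_X ^ e * Y = fps_X ^ e * (fps_const a * Y)"
    by (simp add: mult_ac)
  with assms show ?thesis
    unfolding eq_upto_def by (simp only:) (simp add: fps_X_power_mult_nth)
qed

lemma eq_upto_qbinom_diag_sum_mult_qpoch_lim:
  fixes Q :: "'a::idom fps"
  assumes Q: "Q $ 0 = 0" "Q \<noteq> 0" and k: "\<bar>k\<bar> < int N"
  shows "eq_upto (N - nat \<bar>k\<bar> - 1) (qbinom_diag_sum Q N k * qpoch_lim Q Q) 1"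
proof -
  have "qfact Q m \<noteq> 0" for m
  proof -
    have "qfact Q m $ 0 = 1"
      unfolding qfact_eq_qpoch using Q(1) by (rule qpoch_nth_0)
    thus ?thesis by auto
  qed
  hence "qbinom_diag_sum Q N (int (nat \<bar>k\<bar>)) = qbinom Q (N + N) (N + nat \<bar>k\<bar>)"
    using k by (intro qbinom_diag_sum_eq[OF Q(2)]) auto
  moreover have "qbinom_diag_sum Q N k = qbinom_diag_sum Q N (int (nat \<bar>k\<bar>))"
  proof (cases "k \<ge> 0")
    case False
    thus ?thesis
      using qbinom_diag_sum_uminus[of Q N k] by simp
  qed simp
  ultimately show ?thesis
    using eq_upto_qbinom_mult_qpoch_lim[OF Q(1), of "nat \<bar>k\<bar>" N] k by simp
qed

text \<open>Truncate both Pochhammer symbols at \<open>N\<close>, expand them by the q-binomial theorem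
  and collect terms by \<open>k = i - j\<close>: by q-Vandermonde the coefficient of the \<open>k\<close>-th term
  becomes \<open>[2N, N + |k|]\<close>, which tends to \<open>1 / (q\<^sup>\<alpha>\<^sup>+\<^sup>\<beta>; q\<^sup>\<alpha>\<^sup>+\<^sup>\<beta>)\<^sub>\<infinity>\<close>.\<close>
theorem jacobi_triple_product:
  fixes D D' :: "'a::idom"
  assumes DD': "D * D' = 1" and \<alpha>\<beta>: "1 \<le> \<alpha> + \<beta>"
  defines "Q \<equiv> fps_X ^ (\<alpha> + \<beta>)"
  shows "qpoch_lim (fps_const D * fps_X ^ \<alpha>) Q * qpoch_lim (fps_const D' * fps_X ^ \<beta>) Q * qpoch_lim Q Q
           = gf_sum UNIV (zpow (- D) (- D')) (jtp_exp \<alpha> \<beta>)"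
proof (rule fps_eq_if_eq_upto)
  fix n :: nat
  define c where "c = fps_const D * (fps_X ^ \<alpha> :: 'a fps)"
  define c' where "c' = fps_const D' * (fps_X ^ \<beta> :: 'a fps)"
  define P where "P = qpoch_lim Q Q"
  define N where "N = 2 * n + 2"
  define T where "T k = fps_const (zpow (- D) (- D') k) * (fps_X ^ jtp_exp \<alpha> \<beta> k :: 'a fps)" for k
  define G where "G = qbinom_diag_sum Q N"
  define K where "K = {- int N..int N}"
  have Q0: "Q $ 0 = 0" "Q \<noteq> 0"
    using \<alpha>\<beta> by (simp_all add: Q_def zero_power) linarith
  have "eq_upto n (qpoch_lim c Q * qpoch_lim c' Q * P) (qpoch c Q N * qpoch c' Q N * P)"
    by (intro eq_upto_mult eq_upto_refl eq_upto_sym[OF eq_upto_qpoch_lim[OF Q0(1)]]) (auto simp: N_def)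
  also have "qpoch c Q N * qpoch c' Q N = (\<Sum>k\<in>K. G k * T k)"
  proof -
    have "qpoch c Q N * qpoch c' Q N
        = (\<Sum>i\<le>N. \<Sum>j\<le>N. qbinom Q N i * qbinom Q N j * Q ^ (i * j) * T (int i - int j))"
      unfolding c_def c'_def T_def Q_def by (rule qpoch_mult_qpoch_expansion[OF DD'])
    also have "\<dots> = (\<Sum>k\<in>K. \<Sum>(i, j)\<in>{p\<in>{..N} \<times> {..N}. int (fst p) - int (snd p) = k}.
                        qbinom Q N i * qbinom Q N j * Q ^ (i * j) * T (int i - int j))"
      unfolding K_def by (rule sum_sum_group_by_diff)
    also have "\<dots> = (\<Sum>k\<in>K. G k * T k)"
      unfolding G_def qbinom_diag_sum_def sum_distrib_right
      by (intro sum.cong refl) (auto simp: case_prod_beta)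
    finally show ?thesis .
  qed
  also have "(\<Sum>k\<in>K. G k * T k) * P = (\<Sum>k\<in>K. T k * (G k * P))"
    by (simp add: sum_distrib_right sum_distrib_left mult_ac)
  also have "eq_upto n \<dots> (\<Sum>k\<in>K. T k)"
  proof (rule eq_upto_sum)
    fix k assume "k \<in> K"
    show "eq_upto n (T k * (G k * P)) (T k)"
    proof (cases "\<bar>k\<bar> \<le> int n + 1")
      case True
      have "eq_upto (N - nat \<bar>k\<bar> - 1) (G k * P) 1"
        unfolding G_def P_def using True
        by (intro eq_upto_qbinom_diag_sum_mult_qpoch_lim Q0) (simp add: N_def)
      hence "eq_upto n (G k * P) 1"
        by (rule eq_upto_mono) (use True in \<open>simp add: N_def\<close>)
      hence "eq_upto n (T k * (G k * P)) (T k * 1)"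
        by (intro eq_upto_mult eq_upto_refl)
      thus ?thesis by simp
    next
      case False
      hence "n < jtp_exp \<alpha> \<beta> k"
        using jtp_exp_le_imp[OF \<alpha>\<beta>, of k n] by linarith
      hence "eq_upto n (T k * (G k * P)) 0" "eq_upto n (T k * 1) 0"
        unfolding T_def by (rule eq_upto_monomial_mult_0)+
      thus ?thesis
        by (auto intro: eq_upto_trans eq_upto_sym)
    qed
  qed
  also have "eq_upto n (\<Sum>k\<in>K. T k) (gf_sum UNIV (zpow (- D) (- D')) (jtp_exp \<alpha> \<beta>))"
    unfolding T_def
  proof (rule eq_upto_gf_sum)
    fix k assume "jtp_exp \<alpha> \<beta> k \<le> n"
    hence "\<bar>k\<bar> \<le> int n + 1"
      by (rule jtp_exp_le_imp[OF \<alpha>\<beta>])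
    thus "k \<in> K"
      by (auto simp: K_def N_def abs_le_iff)
  qed (simp_all add: K_def)
  finally show "eq_upto n (qpoch_lim (fps_const D * fps_X ^ \<alpha>) Q * qpoch_lim (fps_const D' * fps_X ^ \<beta>) Q * qpoch_lim Q Q)
      (gf_sum UNIV (zpow (- D) (- D')) (jtp_exp \<alpha> \<beta>))"
    unfolding c_def c'_def P_def .
qed

lemma zpow_eq_power_mult_power: "a * b = 1 \<Longrightarrow> zpow a b k = a ^ nat k * b ^ nat (- k)"
  using power_mult_power_eq_zpow[of a b "nat k" "nat (- k)"] by simp

lemma zpow_add:
  assumes "a * b = 1"
  shows "zpow a b (k + l) = zpow a b k * zpow a b l"
proof -
  have "zpow a b k * zpow a b l = a ^ (nat k + nat l) * b ^ (nat (- k) + nat (- l))"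
    by (simp add: zpow_eq_power_mult_power[OF assms] power_add mult_ac)
  also have "\<dots> = zpow a b (int (nat k + nat l) - int (nat (- k) + nat (- l)))"
    by (rule power_mult_power_eq_zpow[OF assms])
  also have "int (nat k + nat l) - int (nat (- k) + nat (- l)) = k + l"
    by linarith
  finally show ?thesis by (rule sym)
qed

lemma zpow_uminus: "zpow (- a) (- b) k = zpow (- 1) (- 1) k * zpow a b k"
  by (simp add: zpow_def power_minus[of a] power_minus[of b])

lemma zpow_power2:
  assumes "a * b = 1"
  shows "zpow (a ^ 2) (b ^ 2) k = zpow a b (2 * k)"
proof -
  have "zpow (a ^ 2) (b ^ 2) k = zpow a b k * zpow a b k"
    by (simp add: zpow_def power2_eq_square power_mult_distrib)
  also have "\<dots> = zpow a b (2 * k)"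
    using zpow_add[OF assms, of k k] by (metis mult_2)
  finally show ?thesis .
qed

definition neg_one_zpow :: "int \<Rightarrow> 'a::comm_ring_1" where
  "neg_one_zpow = zpow (- 1) (- 1)"

lemma neg_one_zpow_add: "neg_one_zpow (k + l) = neg_one_zpow k * neg_one_zpow l"
  unfolding neg_one_zpow_def by (rule zpow_add) simp

lemma neg_one_zpow_even: "neg_one_zpow (2 * k) = 1"
proof -
  have "neg_one_zpow (2 * k) = zpow ((- 1) ^ 2) ((- 1) ^ 2) k"
    unfolding neg_one_zpow_def by (rule zpow_power2[symmetric]) simp
  also have "\<dots> = 1"
    by (simp add: zpow_def)
  finally show ?thesis .
qed

lemma neg_one_zpow_odd: "neg_one_zpow (2 * k + 1) = (- 1 :: 'a::comm_ring_1)"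
proof -
  have "neg_one_zpow 1 = (- 1 :: 'a)"
    by (simp add: neg_one_zpow_def zpow_def)
  thus ?thesis
    using neg_one_zpow_add[of "2 * k" 1] neg_one_zpow_even[of k] by (metis mult_1)
qed

lemma two_jtp_exp: "2 * int (jtp_exp \<alpha> \<beta> k) = int \<alpha> * (k * (k + 1)) + int \<beta> * (k * (k - 1))"
proof -
  have choose: "2 * int (l choose 2) = int l * (int l - 1)" for l
  proof -
    have "2 * int (l choose 2) = int (l * (l - 1))"
      using two_times_choose_two[of l] by (metis of_nat_mult of_nat_numeral)
    thus ?thesis by (cases l) (simp_all add: algebra_simps)
  qed
  show ?thesis
  proof (cases "k \<ge> 0")
    case True
    have "2 * int (jtp_exp \<alpha> \<beta> k)
        = int \<alpha> * (2 * int (nat k + 1 choose 2)) + int \<beta> * (2 * int (nat k choose 2))"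
      using True by (simp add: jtp_exp_def algebra_simps)
    thus ?thesis
      unfolding choose using True by (simp add: algebra_simps)
  next
    case False
    have "2 * int (jtp_exp \<alpha> \<beta> k)
        = int \<alpha> * (2 * int (nat (- k) choose 2)) + int \<beta> * (2 * int (nat (- k) + 1 choose 2))"
      using False by (simp add: jtp_exp_def algebra_simps)
    thus ?thesis
      unfolding choose using False by (simp add: algebra_simps)
  qed
qed

lemma two_pent: "2 * pent p = p * (3 * p - 1)"
proof -
  have "even (p * (3 * p - 1))"
  proof (cases "even p")
    case False
    hence "even (3 * p - 1)" by presburger
    thus ?thesis by simp
  qed simp
  thus ?thesis by (simp add: pent_def)
qed

lemma abs_le_pent: "\<bar>p\<bar> \<le> pent p"
proof -
  have "2 * \<bar>p\<bar> \<le> p * (3 * p - 1)"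
  proof (cases "p \<ge> 0")
    case True
    hence "p * 2 \<le> p * (3 * p - 1)"
      by (cases "p = 0") (simp_all add: mult_left_mono)
    thus ?thesis using True by simp
  next
    case False
    hence "(- p) * 2 \<le> (- p) * (1 - 3 * p)"
      by (intro mult_left_mono) auto
    thus ?thesis using False by (simp add: algebra_simps)
  qed
  thus ?thesis using two_pent[of p] by simp
qed

lemma finite_fibres_pent: "finite_fibres A (\<lambda>p. nat (pent p))"
  unfolding finite_fibres_def
proof
  fix n
  have "p \<in> {- int n..int n}" if "nat (pent p) = n" for p
    using abs_le_pent[of p] that by (auto simp: abs_le_iff)
  hence "{p\<in>A. nat (pent p) = n} \<subseteq> {- int n..int n}"
    by blast
  thus "finite {p\<in>A. nat (pent p) = n}"
    by (rule finite_subset) simp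
qed

section \<open>A product of two theta series\<close>

definition lhs_exp :: "int \<times> int \<Rightarrow> nat" where
  "lhs_exp = (\<lambda>(m, n). jtp_exp 0 1 m + jtp_exp 1 1 n)"

definition rhs_exp :: "int \<times> int \<Rightarrow> nat" where
  "rhs_exp = (\<lambda>(j, p). jtp_exp 2 4 j + nat (pent p))"

lemma two_lhs_exp: "2 * int (lhs_exp (m, n)) = m * (m - 1) + 2 * n * n"
proof -
  have "2 * int (lhs_exp (m, n)) = 2 * int (jtp_exp 0 1 m) + 2 * int (jtp_exp 1 1 n)"
    by (simp add: lhs_exp_def)
  thus ?thesis
    unfolding two_jtp_exp by (simp add: algebra_simps)
qed

lemma two_rhs_exp: "2 * int (rhs_exp (j, p)) = 6 * j * j - 2 * j + p * (3 * p - 1)"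
proof -
  have "0 \<le> pent p"
    using abs_le_pent[of p] by linarith
  hence "2 * int (rhs_exp (j, p)) = 2 * int (jtp_exp 2 4 j) + 2 * pent p"
    by (simp add: rhs_exp_def)
  thus ?thesis
    unfolding two_jtp_exp two_pent by (simp add: algebra_simps)
qed

text \<open>The lattice \<open>\<int>\<^sup>2\<close> of the left-hand side splits into the three classes of
  \<open>m + 2n mod 3\<close>: two of them are parametrised by the right-hand side, the third one cancels.\<close>
definition residue_class :: "int \<Rightarrow> (int \<times> int) set" where
  "residue_class i = {(m, n). (m + 2 * n) mod 3 = i}"

definition class0_param :: "int \<times> int \<Rightarrow> int \<times> int" where
  "class0_param = (\<lambda>(j, p). (p + 2 * j, p - j))"

definition class1_param :: "int \<times> int \<Rightarrow> int \<times> int" where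
  "class1_param = (\<lambda>(j, p). (1 - p - 2 * j, j - p))"

definition class2_invol :: "int \<times> int \<Rightarrow> int \<times> int" where
  "class2_invol = (\<lambda>(m, n). let q = (m + 2 * n) div 3 in (m + 2 * n - 2 * (2 * q + 1 - n), 2 * q + 1 - n))"

lemma residue_class_partition:
  "UNIV = residue_class 0 \<union> (residue_class 1 \<union> residue_class 2)"
  "residue_class 0 \<inter> (residue_class 1 \<union> residue_class 2) = {}"
  "residue_class 1 \<inter> residue_class 2 = {}"
  by (auto simp: residue_class_def)

lemma bij_betw_class0_param: "bij_betw class0_param UNIV (residue_class 0)"
proof (rule bij_betw_byWitness[where f' = "\<lambda>(m, n). ((m + 2 * n) div 3 - n, (m + 2 * n) div 3)"])
  show "\<forall>x\<in>residue_class 0. class0_param ((\<lambda>(m, n). ((m + 2 * n) div 3 - n, (m + 2 * n) div 3)) x) = x"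
  proof
    fix x assume "x \<in> residue_class 0"
    then obtain m n where x: "x = (m, n)" "(m + 2 * n) mod 3 = 0"
      by (auto simp: residue_class_def)
    hence "3 * ((m + 2 * n) div 3) = m + 2 * n"
      by presburger
    thus "class0_param ((\<lambda>(m, n). ((m + 2 * n) div 3 - n, (m + 2 * n) div 3)) x) = x"
      using x by (auto simp: class0_param_def)
  qed
qed (auto simp: class0_param_def residue_class_def)

lemma bij_betw_class1_param: "bij_betw class1_param UNIV (residue_class 1)"
proof (rule bij_betw_byWitness[where f' = "\<lambda>(m, n). (n + (1 - (m + 2 * n)) div 3, (1 - (m + 2 * n)) div 3)"])
  show "\<forall>x\<in>residue_class 1. class1_param ((\<lambda>(m, n). (n + (1 - (m + 2 * n)) div 3, (1 - (m + 2 * n)) div 3)) x) = x"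
  proof
    fix x assume "x \<in> residue_class 1"
    then obtain m n where x: "x = (m, n)" "(m + 2 * n) mod 3 = 1"
      by (auto simp: residue_class_def)
    hence "3 * ((1 - (m + 2 * n)) div 3) = 1 - (m + 2 * n)"
      by presburger
    thus "class1_param ((\<lambda>(m, n). (n + (1 - (m + 2 * n)) div 3, (1 - (m + 2 * n)) div 3)) x) = x"
      using x by (auto simp: class1_param_def)
  qed
  have "(1 - (1 - p - 2 * j + 2 * (j - p))) div 3 = p" for j p :: int
    by simp
  thus "\<forall>x\<in>UNIV. (\<lambda>(m, n). (n + (1 - (m + 2 * n)) div 3, (1 - (m + 2 * n)) div 3)) (class1_param x) = x"
    by (auto simp: class1_param_def)
  have "(1 - p - 2 * j + 2 * (j - p)) mod 3 = 1" for j p :: int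
    by presburger
  thus "class1_param ` UNIV \<subseteq> residue_class 1"
    by (auto simp: class1_param_def residue_class_def)
qed simp

lemma lhs_exp_class0_param: "lhs_exp (class0_param (j, p)) = rhs_exp (j, p)"
proof -
  have "2 * int (lhs_exp (p + 2 * j, p - j)) = 2 * int (rhs_exp (j, p))"
    unfolding two_lhs_exp two_rhs_exp by (simp add: algebra_simps)
  thus ?thesis by (simp add: class0_param_def)
qed

lemma lhs_exp_class1_param: "lhs_exp (class1_param (j, p)) = rhs_exp (j, p)"
proof -
  have "2 * int (lhs_exp (1 - p - 2 * j, j - p)) = 2 * int (rhs_exp (j, p))"
    unfolding two_lhs_exp two_rhs_exp by (simp add: algebra_simps)
  thus ?thesis by (simp add: class1_param_def)
qed

lemma class2_invol:
  assumes "x \<in> residue_class 2"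
  shows "class2_invol x \<in> residue_class 2" "class2_invol (class2_invol x) = x"
    "lhs_exp (class2_invol x) = lhs_exp x"
    "(neg_one_zpow (fst (class2_invol x) + snd (class2_invol x)) :: 'a::comm_ring_1)
       = - neg_one_zpow (fst x + snd x)"
    "fst (class2_invol x) + 2 * snd (class2_invol x) = fst x + 2 * snd x"
proof -
  obtain m n where x: "x = (m, n)" by force
  define q where "q = (m + 2 * n) div 3"
  have mn: "m = 3 * q + 2 - 2 * n"
    using assms unfolding x q_def residue_class_def by simp presburger
  have ix: "class2_invol (m, n) = (m + 2 * n - 2 * (2 * q + 1 - n), 2 * q + 1 - n)"
    by (simp add: class2_invol_def q_def Let_def)
  show "fst (class2_invol x) + 2 * snd (class2_invol x) = fst x + 2 * snd x"
    unfolding x ix by simp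
  thus "class2_invol x \<in> residue_class 2"
    using assms by (auto simp: residue_class_def x)
  have "(m + 2 * n - 2 * (2 * q + 1 - n) + 2 * (2 * q + 1 - n)) div 3 = q"
    by (simp add: q_def)
  thus "class2_invol (class2_invol x) = x"
    unfolding x ix by (simp add: class2_invol_def Let_def)
  have "2 * int (lhs_exp (class2_invol x)) = 2 * int (lhs_exp x)"
    unfolding x ix two_lhs_exp unfolding mn by (simp add: algebra_simps)
  thus "lhs_exp (class2_invol x) = lhs_exp x"
    by simp
  have "m + 2 * n - 2 * (2 * q + 1 - n) + (2 * q + 1 - n) = (m + n) + (2 * (n - q - 1) + 1)"
    by simp
  hence "(neg_one_zpow (m + 2 * n - 2 * (2 * q + 1 - n) + (2 * q + 1 - n)) :: 'a)
      = neg_one_zpow (m + n) * neg_one_zpow (2 * (n - q - 1) + 1)"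
    by (simp only: neg_one_zpow_add[symmetric])
  also have "\<dots> = - neg_one_zpow (m + n)"
    unfolding neg_one_zpow_odd by simp
  finally have "(neg_one_zpow (m + 2 * n - 2 * (2 * q + 1 - n) + (2 * q + 1 - n)) :: 'a) = - neg_one_zpow (m + n)" .
  thus "(neg_one_zpow (fst (class2_invol x) + snd (class2_invol x)) :: 'a) = - neg_one_zpow (fst x + snd x)"
    unfolding x ix by simp
qed

definition theta_weight :: "'a::comm_ring_1 \<Rightarrow> 'a \<Rightarrow> int \<times> int \<Rightarrow> 'a" where
  "theta_weight z w = (\<lambda>(m, n). neg_one_zpow (m + n) * zpow z w (m + 2 * n))"

lemma finite_fibres_lhs_exp: "finite_fibres A lhs_exp"
proof -
  have "finite_fibres (UNIV \<times> UNIV) (\<lambda>(m, n). jtp_exp 0 1 m + jtp_exp 1 1 n)"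
    by (intro finite_fibres_Times finite_fibres_jtp_exp) simp_all
  thus ?thesis
    unfolding lhs_exp_def UNIV_Times_UNIV by (rule finite_fibres_subset) simp
qed

lemma theta_lhs_eq_gf_sum:
  fixes z w :: "'a::comm_ring_1"
  assumes zw: "z * w = 1"
  shows "gf_sum UNIV (zpow (- z) (- w)) (jtp_exp 0 1) * gf_sum UNIV (zpow (- (z ^ 2)) (- (w ^ 2))) (jtp_exp 1 1)
           = gf_sum UNIV (theta_weight z w) lhs_exp"
proof -
  have "gf_sum UNIV (zpow (- z) (- w)) (jtp_exp 0 1) * gf_sum UNIV (zpow (- (z ^ 2)) (- (w ^ 2))) (jtp_exp 1 1)
      = gf_sum (UNIV \<times> UNIV) (\<lambda>(m, n). zpow (- z) (- w) m * zpow (- (z ^ 2)) (- (w ^ 2)) n)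
          (\<lambda>(m, n). jtp_exp 0 1 m + jtp_exp 1 1 n)"
    by (rule gf_sum_mult) (simp_all add: finite_fibres_jtp_exp)
  also have "\<dots> = gf_sum UNIV (theta_weight z w) lhs_exp"
    unfolding UNIV_Times_UNIV
  proof (rule gf_sum_cong)
    fix x :: "int \<times> int"
    obtain m n where x: "x = (m, n)" by force
    have "z ^ 2 * w ^ 2 = 1"
      using zw by (simp flip: power_mult_distrib)
    hence "zpow (- z) (- w) m * zpow (- (z ^ 2)) (- (w ^ 2)) n
        = neg_one_zpow m * zpow z w m * (neg_one_zpow n * zpow z w (2 * n))"
      by (simp add: zpow_uminus[of z w] zpow_uminus[of "z ^ 2" "w ^ 2"] zpow_power2 zw neg_one_zpow_def)
    also have "\<dots> = theta_weight z w x"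
      by (simp add: theta_weight_def x neg_one_zpow_add zpow_add[OF zw] mult_ac)
    finally show "(\<lambda>(m, n). zpow (- z) (- w) m * zpow (- (z ^ 2)) (- (w ^ 2)) n) x = theta_weight z w x"
      by (simp add: x)
  qed (simp add: lhs_exp_def)
  finally show ?thesis .
qed

lemma gf_sum_residue_class0:
  "gf_sum (residue_class 0) (theta_weight z w) lhs_exp
     = gf_sum UNIV (\<lambda>(j, p). neg_one_zpow j * zpow z w (3 * p)) rhs_exp"
  unfolding gf_sum_reindex[OF bij_betw_class0_param]
proof (rule gf_sum_cong)
  fix x :: "int \<times> int"
  obtain j p where x: "x = (j, p)" by force
  have "p + 2 * j + (p - j) = 2 * p + j"
    by simp
  hence "neg_one_zpow (p + 2 * j + (p - j)) = (neg_one_zpow j :: 'a)"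
    by (simp add: neg_one_zpow_add neg_one_zpow_even)
  thus "(theta_weight z w \<circ> class0_param) x = (\<lambda>(j, p). neg_one_zpow j * zpow z w (3 * p)) x"
    by (simp add: x theta_weight_def class0_param_def)
qed (auto simp: lhs_exp_class0_param)

lemma gf_sum_residue_class1:
  "gf_sum (residue_class 1) (theta_weight z w) lhs_exp
     = - gf_sum UNIV (\<lambda>(j, p). neg_one_zpow j * zpow z w (1 - 3 * p)) rhs_exp"
  unfolding gf_sum_reindex[OF bij_betw_class1_param] gf_sum_uminus[symmetric]
proof (rule gf_sum_cong)
  fix x :: "int \<times> int"
  obtain j p where x: "x = (j, p)" by force
  have "1 - p - 2 * j + (j - p) = (2 * (- p - j) + 1) + j"
    by simp
  hence "neg_one_zpow (1 - p - 2 * j + (j - p)) = (neg_one_zpow (2 * (- p - j) + 1) * neg_one_zpow j :: 'a)"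
    by (simp only: neg_one_zpow_add)
  hence "neg_one_zpow (1 - p - 2 * j + (j - p)) = (- neg_one_zpow j :: 'a)"
    unfolding neg_one_zpow_odd by simp
  moreover have "1 - p - 2 * j + 2 * (j - p) = 1 - 3 * p"
    by simp
  ultimately show "(theta_weight z w \<circ> class1_param) x = - (\<lambda>(j, p). neg_one_zpow j * zpow z w (1 - 3 * p)) x"
    by (simp add: x theta_weight_def class1_param_def)
qed (auto simp: lhs_exp_class1_param)

lemma gf_sum_residue_class2:
  fixes z w :: "'a::{idom,semiring_char_0}"
  shows "gf_sum (residue_class 2) (theta_weight z w) lhs_exp = 0"
proof (rule gf_sum_sign_reversing_involution[where \<iota> = class2_invol])
  fix x assume x: "x \<in> residue_class 2"
  show "class2_invol x \<in> residue_class 2" "class2_invol (class2_invol x) = x"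
    "lhs_exp (class2_invol x) = lhs_exp x"
    using class2_invol[OF x] by auto
  have "(neg_one_zpow (fst (class2_invol x) + snd (class2_invol x)) :: 'a) = - neg_one_zpow (fst x + snd x)"
    by (rule class2_invol(4)[OF x])
  thus "theta_weight z w (class2_invol x) = - theta_weight z w x"
    using class2_invol(5)[OF x] by (simp add: theta_weight_def case_prod_beta)
qed

theorem theta_product_identity:
  fixes z w :: "'a::{idom,semiring_char_0}"
  assumes zw: "z * w = 1"
  shows "gf_sum UNIV (zpow (- z) (- w)) (jtp_exp 0 1) * gf_sum UNIV (zpow (- (z ^ 2)) (- (w ^ 2))) (jtp_exp 1 1)
       = gf_sum UNIV (zpow (- 1) (- 1)) (jtp_exp 2 4)
         * gf_sum UNIV (\<lambda>p. zpow z w (3 * p) - zpow z w (1 - 3 * p)) (\<lambda>p. nat (pent p))"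
proof -
  have "gf_sum UNIV (zpow (- 1) (- 1)) (jtp_exp 2 4)
         * gf_sum UNIV (\<lambda>p. zpow z w (3 * p) - zpow z w (1 - 3 * p)) (\<lambda>p. nat (pent p))
      = gf_sum (UNIV \<times> UNIV) (\<lambda>(j, p). zpow (- 1) (- 1) j * (zpow z w (3 * p) - zpow z w (1 - 3 * p)))
          (\<lambda>(j, p). jtp_exp 2 4 j + nat (pent p))"
    by (rule gf_sum_mult[OF finite_fibres_jtp_exp finite_fibres_pent]) simp
  also have "\<dots> = gf_sum UNIV (\<lambda>(j, p). neg_one_zpow j * zpow z w (3 * p) - neg_one_zpow j * zpow z w (1 - 3 * p)) rhs_exp"
    unfolding UNIV_Times_UNIV
    by (rule gf_sum_cong) (auto simp: rhs_exp_def neg_one_zpow_def algebra_simps)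
  also have "\<dots> = gf_sum (residue_class 0) (theta_weight z w) lhs_exp + gf_sum (residue_class 1) (theta_weight z w) lhs_exp"
    unfolding gf_sum_residue_class0 gf_sum_residue_class1
    using gf_sum_diff[of UNIV "\<lambda>(j, p). neg_one_zpow j * zpow z w (3 * p)"
        "\<lambda>(j, p). neg_one_zpow j * zpow z w (1 - 3 * p)" rhs_exp]
    by (simp add: split_def)
  also have "\<dots> = gf_sum UNIV (theta_weight z w) lhs_exp"
  proof -
    have "gf_sum UNIV (theta_weight z w) lhs_exp
        = gf_sum (residue_class 0) (theta_weight z w) lhs_exp
          + (gf_sum (residue_class 1) (theta_weight z w) lhs_exp
             + gf_sum (residue_class 2) (theta_weight z w) lhs_exp)"
      unfolding residue_class_partition(1)
      by (simp add: gf_sum_Un_disjoint residue_class_partition(2,3) finite_fibres_lhs_exp)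
    thus ?thesis
      by (simp add: gf_sum_residue_class2)
  qed
  finally show ?thesis
    unfolding theta_lhs_eq_gf_sum[OF zw] ..
qed

text \<open>A series \<open>F :: 'a fps fps\<close> is read as a power series in \<open>q\<close> whose coefficients are
  power series in an inner variable \<open>t\<close>; \<open>zcoeff j F\<close> is its coefficient of \<open>t ^ j\<close>.\<close>
definition zcoeff :: "nat \<Rightarrow> 'a::comm_ring_1 fps fps \<Rightarrow> 'a fps" where
  "zcoeff j F = Abs_fps (\<lambda>n. F $ n $ j)"

lemma zcoeff_nth [simp]: "zcoeff j F $ n = F $ n $ j"
  by (simp add: zcoeff_def)

lemma zcoeff_diff [simp]: "zcoeff j (F - G) = zcoeff j F - zcoeff j G"
  by (simp add: fps_eq_iff)

lemma zcoeff_one [simp]: "zcoeff j 1 = (if j = 0 then 1 else 0)"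
  by (simp add: fps_eq_iff)

lemma zcoeff_fps_const [simp]: "zcoeff j (fps_const a) = fps_const (a $ j)"
  by (simp add: fps_eq_iff)

lemma zcoeff_fps_X [simp]: "zcoeff j fps_X = (if j = 0 then fps_X else 0)"
  by (simp add: fps_eq_iff)

lemma zcoeff_0_mult [simp]: "zcoeff 0 (F * G) = zcoeff 0 F * zcoeff 0 G"
  by (simp add: fps_eq_iff fps_mult_nth fps_sum_nth)

lemma zcoeff_1_mult: "zcoeff 1 (F * G) = zcoeff 1 F * zcoeff 0 G + zcoeff 0 F * zcoeff 1 G"
proof -
  have "(a * b) $ 1 = a $ 1 * b $ 0 + a $ 0 * b $ 1" for a b :: "'a fps"
    by (simp add: fps_mult_nth numeral_2_eq_2)
  thus ?thesis
    by (simp add: fps_eq_iff fps_mult_nth fps_sum_nth sum.distrib)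
qed

lemma zcoeff_0_power [simp]: "zcoeff 0 (F ^ k) = zcoeff 0 F ^ k"
  by (induction k) auto

lemma zcoeff_0_qpoch_lim:
  assumes Q: "Q $ 0 = 0"
  shows "zcoeff 0 (qpoch_lim c Q) = qpoch_lim (zcoeff 0 c) (zcoeff 0 Q)"
proof (rule fps_eq_if_eq_upto)
  fix n
  have "zcoeff 0 (prod f A) = (\<Prod>x\<in>A. zcoeff 0 (f x))" for f :: "nat \<Rightarrow> 'a fps fps" and A
    by (induction A rule: infinite_finite_induct) auto
  hence "zcoeff 0 (qpoch c Q (Suc n)) = qpoch (zcoeff 0 c) (zcoeff 0 Q) (Suc n)"
    by (simp add: qpoch_def)
  moreover have "eq_upto n (zcoeff 0 (qpoch_lim c Q)) (zcoeff 0 (qpoch c Q (Suc n)))"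
    using eq_upto_qpoch_lim[OF Q, of n "Suc n" c] by (simp add: eq_upto_def)
  moreover have "eq_upto n (qpoch (zcoeff 0 c) (zcoeff 0 Q) (Suc n)) (qpoch_lim (zcoeff 0 c) (zcoeff 0 Q))"
    by (rule eq_upto_qpoch_lim) (simp_all add: Q)
  ultimately show "eq_upto n (zcoeff 0 (qpoch_lim c Q)) (qpoch_lim (zcoeff 0 c) (zcoeff 0 Q))"
    by (metis eq_upto_trans)
qed

lemma zcoeff_gf_sum: "zcoeff j (gf_sum A c e) = gf_sum A (\<lambda>x. c x $ j) e"
  by (simp add: fps_eq_iff gf_sum_nth fps_sum_nth)

lemma fps_power_nth_1:
  fixes f :: "'a::comm_ring_1 fps"
  assumes "f $ 0 = 1"
  shows "(f ^ n) $ 1 = of_nat n * f $ 1"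
proof (induction n)
  case (Suc n)
  have "(f ^ Suc n) $ 1 = f $ 0 * (f ^ n) $ 1 + f $ 1 * (f ^ n) $ 0"
    by (simp add: fps_mult_nth numeral_2_eq_2)
  also have "\<dots> = of_nat (Suc n) * f $ 1"
    using Suc assms by (simp add: fps_nth_power_0 algebra_simps)
  finally show ?case .
qed simp

definition zvar :: "rat fps" where
  "zvar = 1 + fps_X"

lemma zvar_nth: "zvar $ 0 = 1" "zvar $ 1 = 1"
  by (simp_all add: zvar_def)

lemma zvar_mult_inverse: "zvar * inverse zvar = 1"
  by (rule inverse_mult_eq_1') (simp add: zvar_nth)

lemma inverse_zvar_nth: "inverse zvar $ 0 = 1" "inverse zvar $ 1 = - 1"
proof -
  have "(zvar * inverse zvar) $ 0 = 1" "(zvar * inverse zvar) $ 1 = 0"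
    by (simp_all add: zvar_mult_inverse)
  hence "zvar $ 0 * inverse zvar $ 0 = 1" "zvar $ 0 * inverse zvar $ 1 + zvar $ 1 * inverse zvar $ 0 = 0"
    by (simp_all add: fps_mult_nth numeral_2_eq_2)
  thus "inverse zvar $ 0 = 1" "inverse zvar $ 1 = - 1"
    by (simp_all add: zvar_def)
qed

lemma zpow_zvar_nth_1: "zpow zvar (inverse zvar) k $ 1 = of_int k"
  by (cases "k \<ge> 0") (simp_all add: zpow_def fps_power_nth_1 zvar_nth inverse_zvar_nth del: One_nat_def)

lemma neg_one_zpow_fps: "(neg_one_zpow k :: 'a::comm_ring_1 fps) = fps_const (neg_one_zpow k)"
proof -
  have "(- 1 :: 'a fps) ^ n = fps_const ((- 1) ^ n)" for n
    by (induction n) (auto simp: fps_const_neg[symmetric] simp del: fps_const_neg)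
  thus ?thesis
    by (simp add: neg_one_zpow_def zpow_def)
qed

abbreviation euler_prod :: "'a::comm_ring_1 fps" where
  "euler_prod \<equiv> qpoch_lim fps_X fps_X"

abbreviation odd_prod :: "'a::comm_ring_1 fps" where
  "odd_prod \<equiv> qpoch_lim fps_X (fps_X ^ 2)"

abbreviation even_prod :: "'a::comm_ring_1 fps" where
  "even_prod \<equiv> qpoch_lim (fps_X ^ 2) (fps_X ^ 2)"

lemma euler_prod_eq: "euler_prod = odd_prod * even_prod"
proof -
  have "euler_prod = (\<Prod>i<2. qpoch_lim (fps_X * fps_X ^ i) (fps_X ^ 2 :: 'a fps))"
    by (rule qpoch_lim_dissect) auto
  thus ?thesis
    by (simp add: numeral_2_eq_2)
qed

lemma gf_sum_jtp_exp_2_4: "gf_sum UNIV (zpow (- 1) (- 1)) (jtp_exp 2 4) = (even_prod :: 'a::idom fps)"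
proof -
  have prod3: "(\<Prod>i<3. f i) = f 0 * f 1 * f 2" for f :: "nat \<Rightarrow> 'a fps"
    by (simp add: numeral_3_eq_3 numeral_2_eq_2 mult_ac)
  have "even_prod = (\<Prod>i<3. qpoch_lim (fps_X ^ 2 * (fps_X ^ 2) ^ i) ((fps_X ^ 2) ^ 3 :: 'a fps))"
    by (rule qpoch_lim_dissect) auto
  also have "\<dots> = qpoch_lim (fps_const 1 * fps_X ^ 2) (fps_X ^ 6)
      * qpoch_lim (fps_const 1 * fps_X ^ 4) (fps_X ^ 6) * qpoch_lim (fps_X ^ 6) (fps_X ^ 6)"
    unfolding prod3 by (simp flip: power_add power_mult)
  also have "\<dots> = gf_sum UNIV (zpow (- 1) (- 1)) (jtp_exp 2 4)"
    using jacobi_triple_product[of 1 1 2 4] by simp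
  finally show ?thesis ..
qed

definition pent_weight_series :: "rat fps" where
  "pent_weight_series = gf_sum UNIV (\<lambda>p. of_int (6 * p - 1)) (\<lambda>p. nat (pent p))"

text \<open>Put \<open>z = 1 + t\<close> with \<open>t\<close> the inner variable and take the coefficient of \<open>t\<close>
  (i.e. differentiate at \<open>z = 1\<close>) in the theta product identity, both sides expanded by the
  triple product: on the left only the vanishing factor \<open>1 - z\<close> of \<open>(z; q)\<^sub>\<infinity>\<close> contributes,
  on the right only the pentagonal series.\<close>
lemma pent_weight_series_eq: "pent_weight_series = - (euler_prod ^ 3 * odd_prod ^ 2)"
proof -
  let ?X = "fps_X :: rat fps fps"
  let ?z = "fps_const zvar" and ?w = "fps_const (inverse zvar)"
  define E where "E = (gf_sum UNIV (zpow (- 1) (- 1)) (jtp_exp 2 4) :: rat fps fps)"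
  define R where "R = gf_sum UNIV (\<lambda>p. zpow zvar (inverse zvar) (3 * p) - zpow zvar (inverse zvar) (1 - 3 * p))
                        (\<lambda>p. nat (pent p))"
  define Y where "Y = qpoch_lim (?z * ?X) ?X * qpoch_lim (?w * ?X) ?X * qpoch_lim ?X ?X"
  define Y2 where "Y2 = qpoch_lim (fps_const (zvar ^ 2) * ?X) (?X ^ 2)
                       * qpoch_lim (fps_const (inverse zvar ^ 2) * ?X) (?X ^ 2) * qpoch_lim (?X ^ 2) (?X ^ 2)"
  have zw2: "zvar ^ 2 * inverse zvar ^ 2 = 1"
    using zvar_mult_inverse by (simp flip: power_mult_distrib)
  have jtp1: "(1 - ?z) * Y = gf_sum UNIV (zpow (- zvar) (- inverse zvar)) (jtp_exp 0 1)"
  proof -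
    have "qpoch_lim ?z ?X * qpoch_lim (?w * ?X) ?X * qpoch_lim ?X ?X = (1 - ?z) * Y"
      unfolding Y_def by (subst qpoch_lim_shift) (simp_all add: mult_ac)
    moreover have "qpoch_lim (?z * ?X ^ 0) (?X ^ (0 + 1)) * qpoch_lim (?w * ?X ^ 1) (?X ^ (0 + 1)) * qpoch_lim (?X ^ (0 + 1)) (?X ^ (0 + 1))
        = gf_sum UNIV (zpow (- zvar) (- inverse zvar)) (jtp_exp 0 1)"
      by (rule jacobi_triple_product[OF zvar_mult_inverse]) simp
    ultimately show ?thesis by simp
  qed
  have jtp2: "Y2 = gf_sum UNIV (zpow (- (zvar ^ 2)) (- (inverse zvar ^ 2))) (jtp_exp 1 1)"
    using jacobi_triple_product[OF zw2, of 1 1] by (simp add: Y2_def numeral_2_eq_2)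
  have "((1 - ?z) * Y) * Y2 = E * R"
    unfolding jtp1 jtp2 E_def R_def by (rule theta_product_identity[OF zvar_mult_inverse])
  hence "zcoeff 1 (((1 - ?z) * Y) * Y2) = zcoeff 1 (E * R)"
    by simp
  moreover have "zcoeff 1 (((1 - ?z) * Y) * Y2) = - (euler_prod ^ 3 * (odd_prod ^ 2 * even_prod))"
  proof -
    have "zcoeff 0 (1 - ?z) = 0" "zcoeff 1 (1 - ?z) = - 1"
      by (simp_all add: zvar_def)
    moreover have "zcoeff 0 Y = euler_prod ^ 3"
      by (simp add: Y_def zcoeff_0_qpoch_lim zvar_nth inverse_zvar_nth power3_eq_cube)
    moreover have "zcoeff 0 Y2 = odd_prod ^ 2 * even_prod"
      by (simp add: Y2_def zcoeff_0_qpoch_lim fps_nth_power_0 zvar_nth inverse_zvar_nth power2_eq_square)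
    ultimately show ?thesis
      unfolding zcoeff_1_mult[of "(1 - ?z) * Y"] zcoeff_1_mult[of "1 - ?z"] zcoeff_0_mult by simp
  qed
  moreover have "zcoeff 1 (E * R) = even_prod * pent_weight_series"
  proof -
    have "E = gf_sum UNIV (\<lambda>k. fps_const (zpow (- 1) (- 1) k)) (jtp_exp 2 4)"
      unfolding E_def by (rule gf_sum_cong) (simp_all add: neg_one_zpow_fps[unfolded neg_one_zpow_def])
    hence "zcoeff 0 E = gf_sum UNIV (zpow (- 1) (- 1)) (jtp_exp 2 4)" "zcoeff 1 E = gf_sum UNIV (\<lambda>_. 0) (jtp_exp 2 4)"
      by (simp_all add: zcoeff_gf_sum)
    hence "zcoeff 0 E = even_prod" "zcoeff 1 E = 0"
      by (simp_all add: gf_sum_jtp_exp_2_4 fps_eq_iff gf_sum_nth)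
    moreover have "zcoeff 1 R = pent_weight_series"
      unfolding R_def zcoeff_gf_sum pent_weight_series_def
      by (rule gf_sum_cong) (simp_all add: zpow_zvar_nth_1[unfolded One_nat_def])
    ultimately show ?thesis
      unfolding zcoeff_1_mult[of E] by simp
  qed
  ultimately have "even_prod * pent_weight_series = even_prod * - (euler_prod ^ 3 * odd_prod ^ 2)"
    by (simp add: mult_ac)
  moreover have "(even_prod :: rat fps) \<noteq> 0"
    using qpoch_lim_nth_0[of "fps_X ^ 2" "fps_X ^ 2 :: rat fps"] by auto
  ultimately show ?thesis
    by (metis mult_left_cancel)
qed

section \<open>The recurrence for \<open>r\<close> and compositions into pentagonal numbers\<close>

lemma r_gf_mult_eq_1: "r_gf * (euler_prod ^ 3 * odd_prod ^ 2) = 1"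
proof -
  have "r_gf = even_prod ^ 2 / euler_prod ^ 5"
    by (simp add: r_gf_def qpoch_inf_eq_qpoch_lim)
  moreover have unit: "(euler_prod ^ 5 :: rat fps) $ 0 \<noteq> 0"
    by (simp add: fps_nth_power_0 qpoch_lim_nth_0)
  ultimately have "r_gf * euler_prod ^ 5 = even_prod ^ 2 * (inverse (euler_prod ^ 5) * euler_prod ^ 5)"
    by (simp add: fps_divide_unit[OF unit] mult.assoc)
  hence "r_gf * euler_prod ^ 5 = even_prod ^ 2"
    unfolding inverse_mult_eq_1[OF unit] by simp
  hence "r_gf * (euler_prod ^ 3 * odd_prod ^ 2) * euler_prod ^ 2 = even_prod ^ 2 * odd_prod ^ 2"
    by (simp add: mult_ac flip: power_add)
  also have "\<dots> = 1 * euler_prod ^ 2"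
    by (simp add: euler_prod_eq power_mult_distrib mult_ac)
  finally have "r_gf * (euler_prod ^ 3 * odd_prod ^ 2) * euler_prod ^ 2 = 1 * euler_prod ^ 2" .
  moreover have "(euler_prod ^ 2 :: rat fps) \<noteq> 0"
    using qpoch_lim_nth_0[of "fps_X" "fps_X :: rat fps"] by auto
  ultimately show ?thesis
    by (metis mult_right_cancel)
qed

lemma pent_pos: "p \<noteq> 0 \<Longrightarrow> 0 < pent p"
  using abs_le_pent[of p] by linarith

lemma pent_weight_series_nth_0: "pent_weight_series $ 0 = - 1"
proof -
  have "{p. nat (pent p) = 0} = {0}"
    using pent_pos by (force simp: pent_def)
  thus ?thesis
    by (simp add: pent_weight_series_def gf_sum_nth)
qed

lemma r_recurrence: "r n = (if n = 0 then 1 else 0) + (\<Sum>i<n. r i * pent_weight_series $ (n - i))"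
proof -
  have "r_gf * (- pent_weight_series) = 1"
    using r_gf_mult_eq_1 by (simp add: pent_weight_series_eq)
  hence "(if n = 0 then 1 else 0) = (\<Sum>i=0..n. r_gf $ i * (- pent_weight_series) $ (n - i))"
    by (metis fps_mult_nth fps_one_nth)
  also have "\<dots> = (\<Sum>i<n. r_gf $ i * (- pent_weight_series) $ (n - i)) + r_gf $ n * (- pent_weight_series) $ 0"
    by (simp add: atLeast0AtMost lessThan_Suc_atMost[symmetric])
  also have "\<dots> = r n - (\<Sum>i<n. r i * pent_weight_series $ (n - i))"
    by (simp add: pent_weight_series_nth_0 r_def sum_negf)
  finally show ?thesis
    by (simp add: algebra_simps)
qed

lemma inj_nat_pent: "inj (\<lambda>j. nat (pent j))"
proof
  fix j j' assume "nat (pent j) = nat (pent j')"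
  moreover have "0 \<le> pent j" "0 \<le> pent j'"
    using abs_le_pent[of j] abs_le_pent[of j'] by linarith+
  ultimately have "j * (3 * j - 1) = j' * (3 * j' - 1)"
    by (simp flip: two_pent)
  hence "(j - j') * (3 * j + 3 * j' - 1) = 0"
    by (simp add: algebra_simps)
  moreover have "3 * j + 3 * j' - 1 \<noteq> 0"
    by presburger
  ultimately show "j = j'"
    by simp
qed

definition pent_weight :: "nat \<Rightarrow> int" where
  "pent_weight k = (\<Sum>p\<in>{p. nat (pent p) = k}. 6 * p - 1)"

lemma pent_weight_series_nth: "pent_weight_series $ k = of_int (pent_weight k)"
  by (simp add: pent_weight_def pent_weight_series_def gf_sum_nth)

lemma pent_weight_pent: "pent_weight (nat (pent j)) = 6 * j - 1"
proof -
  have "{p. nat (pent p) = nat (pent j)} = {j}"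
    using inj_nat_pent by (auto dest: injD)
  thus ?thesis by (simp add: pent_weight_def)
qed

lemma pent_weight_eq_0: "k \<noteq> 0 \<Longrightarrow> k \<notin> P5 \<Longrightarrow> pent_weight k = 0"
  by (auto simp: pent_weight_def P5_def pent_def intro!: sum.neutral)

definition comp_weight :: "nat list \<Rightarrow> int" where
  "comp_weight c = (\<Prod>j\<in>{j. j \<noteq> 0 \<and> nat (pent j) \<in> set c}. (6 * j - 1) ^ count_list c (nat (pent j)))"

lemma comp_weight_Cons:
  assumes "k \<in> P5"
  shows "comp_weight (k # c) = pent_weight k * comp_weight c"
proof -
  obtain j0 where j0: "j0 \<noteq> 0" "k = nat (pent j0)"
    using assms by (auto simp: P5_def)
  define J where "J c = {j. j \<noteq> 0 \<and> nat (pent j) \<in> set c}" for c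
  define f where "f c j = (6 * j - 1) ^ count_list c (nat (pent j))" for c j
  have "finite (J c)"
  proof (rule finite_subset)
    show "J c \<subseteq> (\<lambda>j. nat (pent j)) -` set c"
      by (auto simp: J_def)
  qed (rule finite_vimageI[OF finite_set inj_nat_pent])
  have J_Cons: "J (k # c) = insert j0 (J c)"
    using j0 inj_nat_pent by (auto simp: J_def dest: injD)
  have f_other: "f (k # c) j = f c j" if "j \<noteq> j0" for j
    using that j0 inj_nat_pent by (auto simp: f_def dest: injD)
  have "comp_weight (k # c) = f (k # c) j0 * (\<Prod>j\<in>J c - {j0}. f (k # c) j)"
    unfolding comp_weight_def J_def[symmetric] f_def[symmetric] J_Cons
    by (rule prod.insert_remove[OF \<open>finite (J c)\<close>])
  also have "\<dots> = (6 * j0 - 1) * (f c j0 * (\<Prod>j\<in>J c - {j0}. f c j))"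
    using f_other j0(2) by (simp add: f_def)
  also have "f c j0 * (\<Prod>j\<in>J c - {j0}. f c j) = comp_weight c"
  proof (cases "j0 \<in> J c")
    case True
    thus ?thesis
      unfolding comp_weight_def J_def[symmetric] f_def[symmetric]
      by (rule prod.remove[OF \<open>finite (J c)\<close>, symmetric])
  next
    case False
    hence "f c j0 = 1"
      using j0 by (simp add: J_def f_def count_list_0_iff)
    thus ?thesis
      using False unfolding comp_weight_def J_def[symmetric] f_def[symmetric] by simp
  qed
  finally show ?thesis
    using pent_weight_pent j0(2) by simp
qed

lemma finite_compositions: "finite (compositions T n)"
proof (rule finite_subset)
  have length_le: "length c \<le> sum_list c" if "\<forall>x\<in>set c. 0 < x" for c :: "nat list"
    using that by (induction c) auto
  show "compositions T n \<subseteq> {c. set c \<subseteq> {..n} \<and> length c \<le> n}"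
    using length_le by (auto simp: compositions_def member_le_sum_list)
qed (rule finite_lists_length_le, simp)

lemma compositions_0: "compositions T 0 = {[]}"
  by (auto simp: compositions_def) (metis neq_Nil_conv list.set_intros(1) sum_list_eq_0_iff not_gr0)

lemma compositions_pos:
  assumes "0 < n"
  shows "compositions T n = (\<Union>k\<in>{k\<in>{1..n}. k \<in> T}. (\<lambda>c. k # c) ` compositions T (n - k))"
proof
  show "compositions T n \<subseteq> (\<Union>k\<in>{k\<in>{1..n}. k \<in> T}. (\<lambda>c. k # c) ` compositions T (n - k))"
  proof
    fix c assume c: "c \<in> compositions T n"
    then obtain k c' where kc: "c = k # c'"
      using assms by (cases c) (auto simp: compositions_def)
    with c have "k \<in> {k\<in>{1..n}. k \<in> T}" "c' \<in> compositions T (n - k)"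
      by (auto simp: compositions_def)
    with kc show "c \<in> (\<Union>k\<in>{k\<in>{1..n}. k \<in> T}. (\<lambda>c. k # c) ` compositions T (n - k))"
      by blast
  qed
qed (auto simp: compositions_def)

lemma sum_comp_weight_recurrence:
  "(\<Sum>c\<in>compositions P5 n. comp_weight c)
     = (if n = 0 then 1 else 0) + (\<Sum>i<n. (\<Sum>c\<in>compositions P5 i. comp_weight c) * pent_weight (n - i))"
proof (cases "n = 0")
  case True
  thus ?thesis by (simp add: compositions_0 comp_weight_def)
next
  case False
  define K where "K = {k\<in>{1..n}. k \<in> P5}"
  have "0 < n"
    using False by simp
  have "(\<Sum>c\<in>compositions P5 n. comp_weight c)
      = (\<Sum>k\<in>K. \<Sum>c\<in>(\<lambda>c. k # c) ` compositions P5 (n - k). comp_weight c)"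
    unfolding compositions_pos[OF \<open>0 < n\<close>] K_def[symmetric]
    by (rule sum.UNION_disjoint) (auto simp: K_def finite_compositions)
  also have "\<dots> = (\<Sum>k\<in>K. \<Sum>c\<in>compositions P5 (n - k). comp_weight (k # c))"
    by (rule sum.cong[OF refl], subst sum.reindex) (auto simp: inj_on_def)
  also have "\<dots> = (\<Sum>k\<in>K. pent_weight k * (\<Sum>c\<in>compositions P5 (n - k). comp_weight c))"
    by (intro sum.cong refl) (auto simp: K_def comp_weight_Cons sum_distrib_left)
  also have "\<dots> = (\<Sum>k\<in>{1..n}. pent_weight k * (\<Sum>c\<in>compositions P5 (n - k). comp_weight c))"
    by (rule sum.mono_neutral_left) (auto simp: K_def pent_weight_eq_0)
  also have "\<dots> = (\<Sum>i<n. (\<Sum>c\<in>compositions P5 i. comp_weight c) * pent_weight (n - i))"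
    by (rule sum.reindex_bij_witness[of _ "\<lambda>i. n - i" "\<lambda>k. n - k"]) (auto simp: mult.commute)
  finally show ?thesis
    using False by simp
qed

lemma r_eq_sum_comp_weight: "r n = of_int (\<Sum>c\<in>compositions P5 n. comp_weight c)"
proof (induction n rule: less_induct)
  case (less n)
  have "r n = (if n = 0 then 1 else 0) + (\<Sum>i<n. r i * pent_weight_series $ (n - i))"
    by (rule r_recurrence)
  also have "\<dots> = (if n = 0 then 1 else 0)
      + (\<Sum>i<n. of_int (\<Sum>c\<in>compositions P5 i. comp_weight c) * of_int (pent_weight (n - i)))"
    using less by (simp add: pent_weight_series_nth)
  also have "\<dots> = of_int (\<Sum>c\<in>compositions P5 n. comp_weight c)"
    by (subst sum_comp_weight_recurrence) simp
  finally show ?case .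
qed

theorem mainTheorem14:
  fixes n :: nat
  shows "r n = of_int (\<Sum>c\<in>compositions P5 n.
            \<Prod>j\<in>{j::int. j \<noteq> 0 \<and> nat (pent j) \<in> set c}.
               (6 * j - 1) ^ count_list c (nat (pent j)))"
  using r_eq_sum_comp_weight[of n] by (simp add: comp_weight_def)

end
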